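(* Let $\mathcal{C}_1$ and $\mathcal{C}_2$ be nice GFG-tNCWs with $L(\mathcal{C}_1)=L(\mathcal{C}_2)$, each minimal (no GFG-tNCW for the same language has fewer states) and each $\alpha$-maximal. Then $\mathcal{C}_1$ and $\mathcal{C}_2$ are isomorphic.
   Context: A tNCW is $\mathcal{A}=\langle\Sigma,Q,q_0,\delta,\alpha\rangle$: finite alphabet $\Sigma$, finite state set $Q$, initial state $q_0$, transition function $\delta:Q\times\Sigma\to 2^Q\setminus\{\emptyset\}$ with transition relation $\Delta=\{\langle q,\sigma,s\rangle:s\in\delta(q,\sigma)\}$, and $\alpha\subseteq\Delta$; $|\mathcal{A}|=|Q|$. $\alpha$-transitions are those in $\alpha$, $\bar\alpha$-transitions those in $\Delta\setminus\alpha$; $\delta^{\alpha}(q,\sigma)$, $\delta^{\bar\alpha}(q,\sigma)$ denote the $\sigma$-successors via $\alpha$-, resp. $\bar\alpha$-transitions. A run on $w=\sigma_1\sigma_2\cdots$ is $r_0r_1\cdots$ with $r_0=q_0$, $r_{i+1}\in\delta(r_i,\sigma_{i+1})$; accepting iff it traverses $\alpha$-transitions only finitely often; $L(\mathcal{A})$ is the accepted language. $\mathcal{A}^q$ is $\mathcal{A}$ with initial state $q$; $q\sim s$ iff $L(\mathcal{A}^q)=L(\mathcal{A}^s)$. $\mathcal{A}$ is GFG if there is $f:\Sigma^*\to Q$ with $f(\epsilon)=q_0$, $\langle f(u),\sigma,f(u\sigma)\rangle\in\Delta$ for all $u,\sigma$, and for every $w\in L(\mathcal{A})$ the run $f(w[1,0]),f(w[1,1]),\dots$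 is accepting; $q$ is GFG if $\mathcal{A}^q$ is. $\mathcal{A}$ is semantically deterministic if all $\sigma$-successors of any state are pairwise $\sim$-equivalent; safe deterministic if $|\delta^{\bar\alpha}(q,\sigma)|\le1$ always; normal if whenever a path of $\bar\alpha$-transitions leads from $q$ to $s$, one also leads from $s$ to $q$. Nice: all states reachable and GFG, and normal, safe deterministic, semantically deterministic. A triple $\langle q,\sigma,s\rangle\in Q\times\Sigma\times Q$ is an allowed transition of $\mathcal{A}$ if there is $s'\in Q$ with $s\sim s'$ and $\langle q,\sigma,s'\rangle\in\Delta$. $\mathcal{A}$ is $\alpha$-maximal if every allowed transition of $\mathcal{A}$ is in $\Delta$. For tNCWs $\mathcal{A},\mathcal{B}$, a bijection $\kappa:Q_\mathcal{A}\to Q_\mathcal{B}$ is $\bar\alpha$-transition respecting if for all $q,q',\sigma$: $q'\in\delta^{\bar\alpha}_\mathcal{A}(q,\sigma)$ iff $\kappa(q')\in\delta^{\bar\alpha}_\mathcal{B}(\kappa(q),\sigma)$, and $\alpha$-transition respecting if the same holds with $\delta^{\alpha}$ in place of $\delta^{\bar\alpha}$. $\mathcal{A}$ and $\mathcal{B}$ are isomorphic if there is a bijection that is both $\alpha$- and $\bar\alpha$-transition respecting. *)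

theory Defs
  imports Main
begin

text \<open>Transition-based co-Buechi automata (tNCWs). The alphabet is an explicit finite set;
  infinite words are functions nat => 'a with letters in the alphabet.\<close>

record ('q, 'a) tNCW =
  states :: "'q set"
  alphabet :: "'a set"
  init :: 'q
  delta :: "'q \<Rightarrow> 'a \<Rightarrow> 'q set"
  acc :: "('q \<times> 'a \<times> 'q) set"

definition trans_rel :: "('q, 'a) tNCW \<Rightarrow> ('q \<times> 'a \<times> 'q) set" where
  "trans_rel A = {(q, \<sigma>, s). q \<in> states A \<and> \<sigma> \<in> alphabet A \<and> s \<in> delta A q \<sigma>}"

definition wf_tNCW :: "('q, 'a) tNCW \<Rightarrow> bool" where
  "wf_tNCW A \<longleftrightarrow> finite (states A) \<and> finite (alphabet A) \<and> init A \<in> states A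
     \<and> (\<forall>q \<in> states A. \<forall>\<sigma> \<in> alphabet A. delta A q \<sigma> \<subseteq> states A \<and> delta A q \<sigma> \<noteq> {})
     \<and> acc A \<subseteq> trans_rel A"

definition delta_acc :: "('q, 'a) tNCW \<Rightarrow> 'q \<Rightarrow> 'a \<Rightarrow> 'q set" where
  "delta_acc A q \<sigma> = {s \<in> delta A q \<sigma>. (q, \<sigma>, s) \<in> acc A}"

definition delta_nacc :: "('q, 'a) tNCW \<Rightarrow> 'q \<Rightarrow> 'a \<Rightarrow> 'q set" where
  "delta_nacc A q \<sigma> = {s \<in> delta A q \<sigma>. (q, \<sigma>, s) \<notin> acc A}"

definition word :: "('q, 'a) tNCW \<Rightarrow> (nat \<Rightarrow> 'a) \<Rightarrow> bool" where
  "word A w \<longleftrightarrow> (\<forall>i. w i \<in> alphabet A)"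

definition run_from :: "('q, 'a) tNCW \<Rightarrow> 'q \<Rightarrow> (nat \<Rightarrow> 'a) \<Rightarrow> (nat \<Rightarrow> 'q) \<Rightarrow> bool" where
  "run_from A q w r \<longleftrightarrow> r 0 = q \<and> (\<forall>i. r (Suc i) \<in> delta A (r i) (w i))"

definition accepting :: "('q, 'a) tNCW \<Rightarrow> (nat \<Rightarrow> 'a) \<Rightarrow> (nat \<Rightarrow> 'q) \<Rightarrow> bool" where
  "accepting A w r \<longleftrightarrow> finite {i. (r i, w i, r (Suc i)) \<in> acc A}"

definition lang_from :: "('q, 'a) tNCW \<Rightarrow> 'q \<Rightarrow> (nat \<Rightarrow> 'a) set" where
  "lang_from A q = {w. word A w \<and> (\<exists>r. run_from A q w r \<and> accepting A w r)}"

definition lang :: "('q, 'a) tNCW \<Rightarrow> (nat \<Rightarrow> 'a) set" where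
  "lang A = lang_from A (init A)"

definition equiv_st :: "('q, 'a) tNCW \<Rightarrow> 'q \<Rightarrow> 'q \<Rightarrow> bool" where
  "equiv_st A q s \<longleftrightarrow> lang_from A q = lang_from A s"

definition prefix :: "(nat \<Rightarrow> 'a) \<Rightarrow> nat \<Rightarrow> 'a list" where
  "prefix w i = map w [0..<i]"

definition GFG_state :: "('q, 'a) tNCW \<Rightarrow> 'q \<Rightarrow> bool" where
  "GFG_state A q \<longleftrightarrow> (\<exists>f :: 'a list \<Rightarrow> 'q. f [] = q
     \<and> (\<forall>u \<sigma>. set u \<subseteq> alphabet A \<longrightarrow> \<sigma> \<in> alphabet A \<longrightarrow> (f u, \<sigma>, f (u @ [\<sigma>])) \<in> trans_rel A)
     \<and> (\<forall>w \<in> lang_from A q. accepting A w (\<lambda>i. f (prefix w i))))"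

definition GFG :: "('q, 'a) tNCW \<Rightarrow> bool" where
  "GFG A \<longleftrightarrow> GFG_state A (init A)"

definition sem_det :: "('q, 'a) tNCW \<Rightarrow> bool" where
  "sem_det A \<longleftrightarrow> (\<forall>q \<in> states A. \<forall>\<sigma> \<in> alphabet A. \<forall>s \<in> delta A q \<sigma>. \<forall>s' \<in> delta A q \<sigma>.
      equiv_st A s s')"

definition safe_det :: "('q, 'a) tNCW \<Rightarrow> bool" where
  "safe_det A \<longleftrightarrow> (\<forall>q \<in> states A. \<forall>\<sigma> \<in> alphabet A. card (delta_nacc A q \<sigma>) \<le> 1)"

definition nacc_edges :: "('q, 'a) tNCW \<Rightarrow> ('q \<times> 'q) set" where
  "nacc_edges A = {(q, s). q \<in> states A \<and> (\<exists>\<sigma> \<in> alphabet A. s \<in> delta_nacc A q \<sigma>)}"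

definition normal :: "('q, 'a) tNCW \<Rightarrow> bool" where
  "normal A \<longleftrightarrow> (\<forall>q s. (q, s) \<in> (nacc_edges A)\<^sup>* \<longrightarrow> (s, q) \<in> (nacc_edges A)\<^sup>*)"

definition all_edges :: "('q, 'a) tNCW \<Rightarrow> ('q \<times> 'q) set" where
  "all_edges A = {(q, s). \<exists>\<sigma>. (q, \<sigma>, s) \<in> trans_rel A}"

definition nice :: "('q, 'a) tNCW \<Rightarrow> bool" where
  "nice A \<longleftrightarrow> (\<forall>q \<in> states A. (init A, q) \<in> (all_edges A)\<^sup>* \<and> GFG_state A q)
     \<and> normal A \<and> safe_det A \<and> sem_det A"

definition allowed :: "('q, 'a) tNCW \<Rightarrow> 'q \<Rightarrow> 'a \<Rightarrow> 'q \<Rightarrow> bool" where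
  "allowed A q \<sigma> s \<longleftrightarrow> q \<in> states A \<and> \<sigma> \<in> alphabet A \<and> s \<in> states A
     \<and> (\<exists>s' \<in> states A. equiv_st A s s' \<and> (q, \<sigma>, s') \<in> trans_rel A)"

definition alpha_maximal :: "('q, 'a) tNCW \<Rightarrow> bool" where
  "alpha_maximal A \<longleftrightarrow> (\<forall>q \<sigma> s. allowed A q \<sigma> s \<longrightarrow> (q, \<sigma>, s) \<in> trans_rel A)"

text \<open>Minimality among all GFG-tNCWs over the same alphabet recognizing the same language.
  Competitors are taken with states in nat; every finite state set embeds into nat.\<close>
definition minimal_GFG :: "('q, 'a) tNCW \<Rightarrow> bool" where
  "minimal_GFG A \<longleftrightarrow> (\<forall>B :: (nat, 'a) tNCW. wf_tNCW B \<and> alphabet B = alphabet A \<and> GFG B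
       \<and> lang B = lang A \<longrightarrow> card (states A) \<le> card (states B))"

definition isomorphic :: "('q, 'a) tNCW \<Rightarrow> ('p, 'a) tNCW \<Rightarrow> bool" where
  "isomorphic A B \<longleftrightarrow> (\<exists>\<kappa>. bij_betw \<kappa> (states A) (states B)
     \<and> (\<forall>q \<in> states A. \<forall>q' \<in> states A. \<forall>\<sigma> \<in> alphabet A.
          (q' \<in> delta_nacc A q \<sigma> \<longleftrightarrow> \<kappa> q' \<in> delta_nacc B (\<kappa> q) \<sigma>)
        \<and> (q' \<in> delta_acc A q \<sigma> \<longleftrightarrow> \<kappa> q' \<in> delta_acc B (\<kappa> q) \<sigma>)))"

end

theory Submission
  imports "HOL-Library.Omega_Words_Fun" Defs
begin

text \<open>
  Call two states strongly equivalent if they have the same language and the same safe language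
  (the words read by a run that uses no \<open>\<alpha>\<close>-transition). Since \<open>C2\<close> is GFG, every state \<open>p\<close>
  of \<open>C1\<close> is dominated by a state of \<open>C2\<close> with the same language and a larger safe language:
  otherwise the strategy of \<open>C2\<close> could be forced, along safe cycles through \<open>p\<close>, to take
  infinitely many \<open>\<alpha>\<close>-transitions on a word that \<open>C1\<close> accepts. Alternating domination between
  the two automata gives an increasing chain of safe languages, which becomes stationary.
  Minimality enters through redirection: if \<open>p \<noteq> q\<close> have the same language, the safe language
  of \<open>q\<close> contains that of \<open>p\<close>, and either both safe languages coincide or \<open>q\<close> cannot safely
  reach \<open>p\<close>, then deleting \<open>p\<close> and redirecting its incoming transitions to \<open>q\<close> yields a
  smaller equivalent GFG automaton. So in a minimal automaton strongly equivalent states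
  coincide, and a state whose safe language is contained in that of an equivalent state \<open>q\<close> is
  safely reachable from \<open>q\<close>; transporting the stationary partner back along such a safe path
  gives every state a strongly equivalent partner in the other automaton. Hence strong
  equivalence is a bijection between the states of \<open>C1\<close> and \<open>C2\<close>. It respects safe
  transitions by safe determinism, and by \<open>\<alpha>\<close>-maximality every transition is determined by
  residual languages, so it respects all transitions.
\<close>

section \<open>Paths, runs and residual languages\<close>

fun path :: "'a set \<Rightarrow> ('q \<Rightarrow> 'a \<Rightarrow> 'q set) \<Rightarrow> 'q \<Rightarrow> 'a list \<Rightarrow> 'q \<Rightarrow> bool" where
  "path \<Sigma> d x [] y \<longleftrightarrow> x = y"
| "path \<Sigma> d x (a # v) y \<longleftrightarrow> a \<in> \<Sigma> \<and> (\<exists>z \<in> d x a. path \<Sigma> d z v y)"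

abbreviation trans_path :: "('q, 'a) tNCW \<Rightarrow> 'q \<Rightarrow> 'a list \<Rightarrow> 'q \<Rightarrow> bool" where
  "trans_path A \<equiv> path (alphabet A) (delta A)"

abbreviation safe_path :: "('q, 'a) tNCW \<Rightarrow> 'q \<Rightarrow> 'a list \<Rightarrow> 'q \<Rightarrow> bool" where
  "safe_path A \<equiv> path (alphabet A) (delta_nacc A)"

lemma path_append: "path \<Sigma> d x (u @ v) y \<longleftrightarrow> (\<exists>z. path \<Sigma> d x u z \<and> path \<Sigma> d z v y)"
  by (induction u arbitrary: x) auto

lemma path_snoc: "path \<Sigma> d x (u @ [a]) y \<longleftrightarrow> a \<in> \<Sigma> \<and> (\<exists>z. path \<Sigma> d x u z \<and> y \<in> d z a)"
  by (auto simp: path_append)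

lemma path_set: "path \<Sigma> d x v y \<Longrightarrow> set v \<subseteq> \<Sigma>"
  by (induction v arbitrary: x) auto

lemma path_mono: "path \<Sigma> d x v y \<Longrightarrow> (\<And>z a. d z a \<subseteq> d' z a) \<Longrightarrow> path \<Sigma> d' x v y"
  by (induction v arbitrary: x) (simp_all, blast)

lemma delta_nacc_subset: "delta_nacc A x a \<subseteq> delta A x a"
  by (auto simp: delta_nacc_def)

lemma safe_path_trans_path: "safe_path A x v y \<Longrightarrow> trans_path A x v y"
  by (erule path_mono) (rule delta_nacc_subset)

lemma delta_states: "wf_tNCW A \<Longrightarrow> x \<in> states A \<Longrightarrow> a \<in> alphabet A \<Longrightarrow> delta A x a \<subseteq> states A"
  by (auto simp: wf_tNCW_def)

lemma delta_nonempty: "wf_tNCW A \<Longrightarrow> x \<in> states A \<Longrightarrow> a \<in> alphabet A \<Longrightarrow> delta A x a \<noteq> {}"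
  by (auto simp: wf_tNCW_def)

lemma delta_nacc_states:
  "wf_tNCW A \<Longrightarrow> x \<in> states A \<Longrightarrow> a \<in> alphabet A \<Longrightarrow> delta_nacc A x a \<subseteq> states A"
  by (rule subset_trans[OF delta_nacc_subset delta_states])

lemma trans_path_states: "wf_tNCW A \<Longrightarrow> x \<in> states A \<Longrightarrow> trans_path A x v y \<Longrightarrow> y \<in> states A"
  by (induction v arbitrary: x) (auto dest: delta_states)

lemma safe_det_unique:
  assumes "wf_tNCW A" "safe_det A" "x \<in> states A" "a \<in> alphabet A"
    and "y \<in> delta_nacc A x a" "y' \<in> delta_nacc A x a"
  shows "y = y'"
proof -
  have "finite (delta_nacc A x a)"
    using assms(1,3,4) delta_nacc_states finite_subset by (metis wf_tNCW_def)
  moreover have "card (delta_nacc A x a) \<le> 1"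
    using assms(2-4) by (auto simp: safe_det_def)
  ultimately show ?thesis
    using assms(5,6) by (metis One_nat_def card_le_Suc0_iff_eq)
qed

lemma safe_path_unique:
  assumes "wf_tNCW A" "safe_det A" "x \<in> states A" "safe_path A x v y" "safe_path A x v y'"
  shows "y = y'"
  using assms(3-)
proof (induction v arbitrary: x)
  case (Cons a v)
  then obtain z z' where "a \<in> alphabet A" "z \<in> delta_nacc A x a" "z' \<in> delta_nacc A x a"
    and "safe_path A z v y" "safe_path A z' v y'"
    by auto
  then show ?case
    using Cons.IH safe_det_unique[OF assms(1,2) Cons.prems(1)]
      delta_nacc_states[OF assms(1) Cons.prems(1)]
    by blast
qed simp

lemma rtrancl_nacc_edges_safe_path:
  "(x, y) \<in> (nacc_edges A)\<^sup>* \<Longrightarrow> \<exists>v. safe_path A x v y"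
proof (induction rule: rtrancl_induct)
  case base
  have "safe_path A x [] x" by simp
  then show ?case by blast
next
  case (step y z)
  then obtain v a where "safe_path A x v y" "a \<in> alphabet A" "z \<in> delta_nacc A y a"
    by (auto simp: nacc_edges_def)
  then have "safe_path A x (v @ [a]) z" by (auto simp: path_snoc)
  then show ?case by blast
qed

lemma safe_path_rtrancl_nacc_edges:
  "wf_tNCW A \<Longrightarrow> x \<in> states A \<Longrightarrow> safe_path A x v y \<Longrightarrow> (x, y) \<in> (nacc_edges A)\<^sup>*"
proof (induction v arbitrary: x)
  case (Cons a v)
  then obtain z where z: "a \<in> alphabet A" "z \<in> delta_nacc A x a" "safe_path A z v y" by auto
  then have "(x, z) \<in> nacc_edges A" using Cons.prems(2) by (auto simp: nacc_edges_def)
  moreover have "(z, y) \<in> (nacc_edges A)\<^sup>*"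
    using Cons.IH[OF Cons.prems(1) _ z(3)] z(1,2) delta_nacc_states[OF Cons.prems(1,2) z(1)]
    by blast
  ultimately show ?case by (rule converse_rtrancl_into_rtrancl)
qed simp

lemma rtrancl_all_edges_trans_path: "(x, y) \<in> (all_edges A)\<^sup>* \<Longrightarrow> \<exists>v. trans_path A x v y"
proof (induction rule: rtrancl_induct)
  case base
  have "trans_path A x [] x" by simp
  then show ?case by blast
next
  case (step y z)
  then obtain v a where "trans_path A x v y" "a \<in> alphabet A" "z \<in> delta A y a"
    by (auto simp: all_edges_def trans_rel_def)
  then have "trans_path A x (v @ [a]) z" by (auto simp: path_snoc)
  then show ?case by blast
qed

lemma word_iff_range: "word A w \<longleftrightarrow> range w \<subseteq> alphabet A"
  by (auto simp: word_def)

lemma prefix_Suc: "prefix w (Suc i) = prefix w i @ [w i]"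
  by (simp add: prefix_def)

lemma length_prefix [simp]: "length (prefix w i) = i"
  by (simp add: prefix_def)

lemma set_prefix_subset: "word A w \<Longrightarrow> set (prefix w i) \<subseteq> alphabet A"
  by (auto simp: prefix_def word_def)

lemma finite_Collect_Suc_iff: "finite {i. P (Suc i)} \<longleftrightarrow> finite {i :: nat. P i}"
  using MOST_Suc_iff[of "\<lambda>i. \<not> P i"] by (simp add: MOST_iff_finiteNeg)

lemma run_states:
  assumes "wf_tNCW A" "x \<in> states A" "word A w" "run_from A x w r"
  shows "r i \<in> states A"
  using assms by (induction i) (auto simp: run_from_def word_def dest: delta_states)

lemma build_in_lang_from:
  assumes "a \<in> alphabet A" "x' \<in> delta A x a" "w \<in> lang_from A x'"
  shows "a ## w \<in> lang_from A x"
proof -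
  obtain r where r: "word A w" "run_from A x' w r" "accepting A w r"
    using assms(3) by (auto simp: lang_from_def)
  have "run_from A x (a ## w) (x ## r)"
    unfolding run_from_def
  proof (intro conjI allI)
    fix i show "(x ## r) (Suc i) \<in> delta A ((x ## r) i) ((a ## w) i)"
      using r(2) assms(2) by (cases i) (auto simp: run_from_def)
  qed simp
  moreover have "accepting A (a ## w) (x ## r)"
    using r(3) finite_Collect_Suc_iff[of "\<lambda>i. ((x ## r) i, (a ## w) i, (x ## r) (Suc i)) \<in> acc A"]
    by (simp add: accepting_def)
  ultimately show ?thesis
    using r(1) assms(1) by (auto simp: lang_from_def word_iff_range)
qed

lemma lang_from_buildE:
  assumes "a ## w \<in> lang_from A x"
  obtains x' where "x' \<in> delta A x a" "w \<in> lang_from A x'"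
proof -
  obtain r where r: "word A (a ## w)" "run_from A x (a ## w) r" "accepting A (a ## w) r"
    using assms by (auto simp: lang_from_def)
  have "r 1 \<in> delta A x a"
    using r(2) unfolding run_from_def by (metis One_nat_def build.simps(1))
  moreover have "\<forall>i. r (Suc (Suc i)) \<in> delta A (r (Suc i)) (w i)"
    using r(2) unfolding run_from_def by (metis build.simps(2))
  then have "run_from A (r 1) w (suffix 1 r)"
    by (simp add: run_from_def)
  moreover have "accepting A w (suffix 1 r)"
    using r(3) finite_Collect_Suc_iff[of "\<lambda>i. (r i, (a ## w) i, r (Suc i)) \<in> acc A"]
    by (simp add: accepting_def)
  moreover have "word A w"
    using r(1) by (simp add: word_iff_range)
  ultimately show thesis
    using that by (auto simp: lang_from_def)
qed

lemma lang_from_residual: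
  assumes "sem_det A" "x \<in> states A" "a \<in> alphabet A" "x' \<in> delta A x a"
  shows "lang_from A x' = {w. a ## w \<in> lang_from A x}"
proof -
  have "w \<in> lang_from A x'" if "a ## w \<in> lang_from A x" for w
  proof -
    obtain x'' where "x'' \<in> delta A x a" "w \<in> lang_from A x''"
      using \<open>a ## w \<in> lang_from A x\<close> by (rule lang_from_buildE)
    moreover have "equiv_st A x'' x'"
      using assms calculation(1) by (auto simp: sem_det_def)
    ultimately show ?thesis
      by (simp add: equiv_st_def)
  qed
  then show ?thesis
    using build_in_lang_from[OF assms(3,4)] by blast
qed

lemma lang_from_trans_path:
  assumes "sem_det A" "wf_tNCW A" "x \<in> states A" "trans_path A x u y"
  shows "lang_from A y = {w. u \<frown> w \<in> lang_from A x}"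
  using assms(3,4)
proof (induction u arbitrary: x)
  case (Cons a u)
  then obtain z where z: "a \<in> alphabet A" "z \<in> delta A x a" "trans_path A z u y"
    by auto
  then have "lang_from A y = {w. u \<frown> w \<in> lang_from A z}"
    using Cons.IH Cons.prems(1) delta_states[OF assms(2)] by blast
  also have "\<dots> = {w. (a # u) \<frown> w \<in> lang_from A x}"
    using lang_from_residual[OF assms(1) Cons.prems(1) z(1,2)] by simp
  finally show ?case .
qed simp

section \<open>Safe languages\<close>

definition safe_lang :: "('q, 'a) tNCW \<Rightarrow> 'q \<Rightarrow> 'a word set" where
  "safe_lang A x = {w. word A w \<and> (\<exists>r. r 0 = x \<and> (\<forall>i. r (Suc i) \<in> delta_nacc A (r i) (w i)))}"

lemma safe_run_safe_path:
  assumes "r 0 = x" "\<forall>i. r (Suc i) \<in> delta_nacc A (r i) (w i)" "word A w"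
  shows "safe_path A x (prefix w n) (r n)"
proof (induction n)
  case (Suc n)
  then show ?case using assms by (auto simp: prefix_Suc path_snoc word_def)
qed (use assms in \<open>simp add: prefix_def\<close>)

lemma safe_lang_subset_lang_from: "safe_lang A x \<subseteq> lang_from A x"
proof
  fix w assume "w \<in> safe_lang A x"
  then obtain r where r: "word A w" "r 0 = x" "\<forall>i. r (Suc i) \<in> delta_nacc A (r i) (w i)"
    by (auto simp: safe_lang_def)
  then have "run_from A x w r" by (auto simp: run_from_def delta_nacc_def)
  moreover have "{i. (r i, w i, r (Suc i)) \<in> acc A} = {}" using r by (auto simp: delta_nacc_def)
  ultimately show "w \<in> lang_from A x" using r by (auto simp: lang_from_def accepting_def)
qed

lemma build_in_safe_lang:
  assumes "a \<in> alphabet A" "x' \<in> delta_nacc A x a" "w \<in> safe_lang A x'"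
  shows "a ## w \<in> safe_lang A x"
proof -
  obtain r where r: "word A w" "r 0 = x'" "\<forall>i. r (Suc i) \<in> delta_nacc A (r i) (w i)"
    using assms(3) by (auto simp: safe_lang_def)
  define r' where "r' = x ## r"
  have "\<forall>i. r' (Suc i) \<in> delta_nacc A (r' i) ((a ## w) i)"
  proof
    fix i show "r' (Suc i) \<in> delta_nacc A (r' i) ((a ## w) i)"
      using r(2,3) assms(2) by (cases i) (auto simp: r'_def)
  qed
  moreover have "r' 0 = x" "word A (a ## w)"
    using r(1) assms(1) by (auto simp: r'_def word_iff_range)
  ultimately show ?thesis
    unfolding safe_lang_def by blast
qed

lemma safe_lang_buildE:
  assumes "a ## w \<in> safe_lang A x"
  obtains x' where "x' \<in> delta_nacc A x a" "w \<in> safe_lang A x'"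
proof -
  obtain r where r: "word A (a ## w)" "r 0 = x" "\<forall>i. r (Suc i) \<in> delta_nacc A (r i) ((a ## w) i)"
    using assms by (auto simp: safe_lang_def)
  have "r 1 \<in> delta_nacc A x a"
    using r(2,3) by (metis One_nat_def build.simps(1))
  moreover have "\<forall>i. r (Suc (Suc i)) \<in> delta_nacc A (r (Suc i)) (w i)"
    using r(3) by (metis build.simps(2))
  then have "w \<in> safe_lang A (r 1)"
    using r(1) unfolding safe_lang_def word_iff_range
    by (auto intro!: exI[of _ "suffix 1 r"])
  ultimately show thesis
    using that by blast
qed

lemma safe_lang_residual:
  assumes "wf_tNCW A" "safe_det A" "x \<in> states A" "a \<in> alphabet A" "x' \<in> delta_nacc A x a"
  shows "safe_lang A x' = {w. a ## w \<in> safe_lang A x}"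
proof -
  have "w \<in> safe_lang A x'" if "a ## w \<in> safe_lang A x" for w
  proof -
    obtain x'' where "x'' \<in> delta_nacc A x a" "w \<in> safe_lang A x''"
      using \<open>a ## w \<in> safe_lang A x\<close> by (rule safe_lang_buildE)
    then show ?thesis
      using safe_det_unique[OF assms(1-4) _ assms(5)] by blast
  qed
  then show ?thesis
    using build_in_safe_lang[OF assms(4,5)] by blast
qed

lemma safe_lang_if_safe_prefixes:
  assumes "wf_tNCW A" "safe_det A" "z \<in> states A" "word A w"
    and "\<And>n. \<exists>y. safe_path A z (prefix w n) y"
  shows "w \<in> safe_lang A z"
proof -
  define r where "r n = (THE y. safe_path A z (prefix w n) y)" for n
  have r: "safe_path A z (prefix w n) (r n)" for n
  proof -
    obtain y where "safe_path A z (prefix w n) y"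
      using assms(5) by blast
    then have "\<exists>!y. safe_path A z (prefix w n) y"
      using safe_path_unique[OF assms(1-3)] by blast
    then show ?thesis
      unfolding r_def by (rule theI')
  qed
  have "r (Suc n) \<in> delta_nacc A (r n) (w n)" for n
  proof -
    obtain m where "safe_path A z (prefix w n) m" "r (Suc n) \<in> delta_nacc A m (w n)"
      using r[of "Suc n"] by (auto simp: prefix_Suc path_snoc)
    then show ?thesis
      using safe_path_unique[OF assms(1-3) _ r[of n]] by blast
  qed
  moreover have "r 0 = z"
    using r[of 0] by (simp add: prefix_def)
  ultimately show ?thesis
    using assms(4) by (auto simp: safe_lang_def)
qed

definition chain_word :: "(nat \<Rightarrow> 'a list) \<Rightarrow> 'a word" where
  "chain_word V i = V (Suc i) ! i"

lemma
  assumes V0: "V 0 = []" and VS: "\<And>n. V (Suc n) = V n @ e n" and e: "\<And>n. e n \<noteq> []"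
  shows length_chain_ge: "n \<le> length (V n)"
    and prefix_chain_word: "m \<le> length (V n) \<Longrightarrow> prefix (chain_word V) m = take m (V n)"
proof -
  show length_ge: "n \<le> length (V n)" for n
  proof (induction n)
    case (Suc n)
    have "length (e n) > 0"
      using e[of n] by simp
    then show ?case
      using Suc.IH unfolding VS length_append by linarith
  qed simp
  have extends: "\<exists>t. V m = V n @ t" if "n \<le> m" for n m
    using that
  proof (induction m)
    case (Suc m)
    show ?case
    proof (cases "n = Suc m")
      case False
      then obtain t where "V m = V n @ t"
        using Suc by (auto simp: le_Suc_eq)
      then show ?thesis
        by (simp add: VS)
    qed simp
  qed simp
  have nth_eq: "V (Suc i) ! i = V n ! i" if "i < length (V n)" for i n
  proof -
    obtain t t' where "V (max n (Suc i)) = V n @ t" "V (max n (Suc i)) = V (Suc i) @ t'"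
      using extends[of n "max n (Suc i)"] extends[of "Suc i" "max n (Suc i)"] by auto
    moreover have "i < length (V (Suc i))"
      using length_ge[of "Suc i"] by simp
    ultimately show ?thesis
      using that by (metis nth_append_left)
  qed
  show "prefix (chain_word V) m = take m (V n)" if "m \<le> length (V n)"
    using that by (intro nth_equalityI) (auto simp: prefix_def chain_word_def nth_eq)
qed

lemma chain_word_in_safe_lang:
  assumes "wf_tNCW A" "safe_det A" "z \<in> states A"
    and V0: "V 0 = []" and VS: "\<And>n. V (Suc n) = V n @ e n"
    and cycle: "\<And>n. e n \<noteq> [] \<and> safe_path A z (e n) z"
  shows "chain_word V \<in> safe_lang A z"
proof (rule safe_lang_if_safe_prefixes[OF assms(1-3)])
  have V: "safe_path A z (V n) z" for n
  proof (induction n)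
    case (Suc n)
    then show ?case
      unfolding VS path_append using cycle by blast
  qed (simp add: V0)
  have e: "e n \<noteq> []" for n
    using cycle by blast
  have len: "n \<le> length (V n)" for n
    by (rule length_chain_ge[OF V0 VS e])
  show "word A (chain_word V)"
    unfolding word_def chain_word_def
  proof
    fix i
    have "V (Suc i) ! i \<in> set (V (Suc i))"
      using len[of "Suc i"] by simp
    then show "V (Suc i) ! i \<in> alphabet A"
      using path_set[OF V] by blast
  qed
  fix n
  have "prefix (chain_word V) n = take n (V n)"
    by (rule prefix_chain_word[OF V0 VS e len])
  moreover have "safe_path A z (take n (V n) @ drop n (V n)) z"
    using V[of n] by simp
  ultimately show "\<exists>y. safe_path A z (prefix (chain_word V) n) y"
    unfolding path_append by auto
qed

lemma normalD: "normal A \<Longrightarrow> (q, s) \<in> (nacc_edges A)\<^sup>* \<Longrightarrow> (s, q) \<in> (nacc_edges A)\<^sup>*"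
  unfolding normal_def by iprover

lemma safe_lang_nonempty:
  assumes "wf_tNCW A" "normal A" "safe_det A" "x \<in> states A" "a \<in> alphabet A"
    and "x' \<in> delta_nacc A x a"
  shows "safe_lang A x' \<noteq> {}"
proof -
  have "(x, x') \<in> nacc_edges A"
    using assms(4-6) by (auto simp: nacc_edges_def)
  then have "(x', x) \<in> (nacc_edges A)\<^sup>*"
    using normalD[OF assms(2)] by blast
  then obtain v where "safe_path A x' v x"
    using rtrancl_nacc_edges_safe_path by metis
  then have cycle: "safe_path A x' (v @ [a]) x'"
    unfolding path_snoc using assms(5,6) by blast
  have "x' \<in> states A"
    using delta_nacc_states[OF assms(1,4,5)] assms(6) by blast
  define V where "V n = concat (map (\<lambda>_. v @ [a]) [0..<n])" for n
  have "V 0 = []" "V (Suc n) = V n @ (v @ [a])" for n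
    by (simp_all add: V_def)
  then have "chain_word V \<in> safe_lang A x'"
    using chain_word_in_safe_lang[OF assms(1,3) \<open>x' \<in> states A\<close>] cycle by simp
  then show ?thesis
    by blast
qed

lemma safe_successor_match:
  fixes A :: "('q, 'a) tNCW" and B :: "('p, 'a) tNCW"
  assumes "wf_tNCW A" "wf_tNCW B" "alphabet A = alphabet B"
    and "normal A" "safe_det A" "sem_det A" "safe_det B" "sem_det B"
    and "x \<in> states A" "y \<in> states B"
    and lang: "lang_from A x = lang_from B y" and safe: "safe_lang A x \<subseteq> safe_lang B y"
    and a: "a \<in> alphabet A" and x': "x' \<in> delta_nacc A x a"
  obtains y' where "y' \<in> delta_nacc B y a" "lang_from A x' = lang_from B y'"
    "safe_lang A x' = {w. a ## w \<in> safe_lang A x}" "safe_lang B y' = {w. a ## w \<in> safe_lang B y}"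
proof -
  obtain w where "w \<in> safe_lang A x'"
    using safe_lang_nonempty[OF assms(1,4,5,9) a x'] by blast
  then have "a ## w \<in> safe_lang B y"
    using build_in_safe_lang[OF a x'] safe by blast
  then obtain y' where y': "y' \<in> delta_nacc B y a"
    by (rule safe_lang_buildE)
  have aB: "a \<in> alphabet B"
    using a assms(3) by simp
  have "lang_from A x' = {w. a ## w \<in> lang_from A x}"
    using lang_from_residual[OF assms(6,9) a] x' delta_nacc_subset[of A x a] by blast
  also have "\<dots> = lang_from B y'"
    using lang_from_residual[OF assms(8,10) aB] y' delta_nacc_subset[of B y a] lang by blast
  finally show thesis
    using that y' safe_lang_residual[OF assms(1,5,9) a x']
      safe_lang_residual[OF assms(2,7,10) aB y']
    by blast
qed

definition strongly_equiv :: "('q, 'a) tNCW \<Rightarrow> 'q \<Rightarrow> ('p, 'a) tNCW \<Rightarrow> 'p \<Rightarrow> bool" where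
  "strongly_equiv A x B y \<longleftrightarrow> lang_from A x = lang_from B y \<and> safe_lang A x = safe_lang B y"

lemma strongly_equiv_sym: "strongly_equiv A x B y \<Longrightarrow> strongly_equiv B y A x"
  by (simp add: strongly_equiv_def)

lemma strongly_equiv_trans:
  "strongly_equiv A x B y \<Longrightarrow> strongly_equiv B y C z \<Longrightarrow> strongly_equiv A x C z"
  by (simp add: strongly_equiv_def)

lemma strongly_equiv_safe_successor:
  fixes A :: "('q, 'a) tNCW" and B :: "('p, 'a) tNCW"
  assumes "wf_tNCW A" "wf_tNCW B" "alphabet A = alphabet B"
    and "normal A" "safe_det A" "sem_det A" "safe_det B" "sem_det B"
    and "x \<in> states A" "y \<in> states B" and equiv: "strongly_equiv A x B y"
    and "a \<in> alphabet A" "x' \<in> delta_nacc A x a"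
  obtains y' where "y' \<in> delta_nacc B y a" "y' \<in> states B" "strongly_equiv A x' B y'"
proof -
  obtain y' where y': "y' \<in> delta_nacc B y a" "lang_from A x' = lang_from B y'"
    "safe_lang A x' = {w. a ## w \<in> safe_lang A x}" "safe_lang B y' = {w. a ## w \<in> safe_lang B y}"
    using safe_successor_match[OF assms(1-10) _ _ assms(12,13)] equiv
    by (auto simp: strongly_equiv_def)
  moreover have "y' \<in> states B"
    using y'(1) delta_nacc_states[OF assms(2,10)] assms(3,12) by blast
  ultimately show thesis
    using that equiv by (simp add: strongly_equiv_def)
qed

section \<open>Strategies and the domination game\<close>

definition strategy :: "('q, 'a) tNCW \<Rightarrow> 'q \<Rightarrow> ('a list \<Rightarrow> 'q) \<Rightarrow> bool" where
  "strategy A x g \<longleftrightarrow> g [] = x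
     \<and> (\<forall>u \<sigma>. set u \<subseteq> alphabet A \<longrightarrow> \<sigma> \<in> alphabet A \<longrightarrow> (g u, \<sigma>, g (u @ [\<sigma>])) \<in> trans_rel A)"

lemma GFG_state_iff:
  "GFG_state A x \<longleftrightarrow>
     (\<exists>g. strategy A x g \<and> (\<forall>w \<in> lang_from A x. accepting A w (\<lambda>i. g (prefix w i))))"
  by (simp add: GFG_state_def strategy_def)

lemma strategy_step:
  "strategy A x g \<Longrightarrow> set u \<subseteq> alphabet A \<Longrightarrow> \<sigma> \<in> alphabet A \<Longrightarrow> g (u @ [\<sigma>]) \<in> delta A (g u) \<sigma>"
  by (simp add: strategy_def trans_rel_def)

lemma strategy_trans_path:
  assumes "strategy A x g" "set u \<subseteq> alphabet A"
  shows "trans_path A x u (g u)"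
  using assms(2)
proof (induction u rule: rev_induct)
  case (snoc a u)
  then have "a \<in> alphabet A" "g (u @ [a]) \<in> delta A (g u) a"
    using strategy_step[OF assms(1)] by auto
  then show ?case
    using snoc unfolding path_snoc by auto
qed (use assms(1) in \<open>simp add: strategy_def\<close>)

lemma strategy_states:
  "wf_tNCW A \<Longrightarrow> x \<in> states A \<Longrightarrow> strategy A x g \<Longrightarrow> set u \<subseteq> alphabet A \<Longrightarrow> g u \<in> states A"
  by (rule trans_path_states[OF _ _ strategy_trans_path])

lemma prefix_conc: "prefix (u \<frown> w) (length u + m) = u @ prefix w m"
proof -
  have "prefix w n = Omega_Words_Fun.prefix n w" for w :: "'a word" and n
    by (simp add: prefix_def subsequence_def)
  then show ?thesis
    by simp
qed

lemma strategy_safe_run_in_safe_lang: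
  assumes "strategy B x g" "set u \<subseteq> alphabet B" "word B w"
    and safe: "\<And>j. (g (u @ prefix w j), w j, g (u @ prefix w (Suc j))) \<notin> acc B"
  shows "w \<in> safe_lang B (g u)"
proof -
  have "g (u @ prefix w (Suc j)) \<in> delta_nacc B (g (u @ prefix w j)) (w j)" for j
  proof -
    have "set (u @ prefix w j) \<subseteq> alphabet B"
      using assms(2) set_prefix_subset[OF assms(3)] by simp
    then have "g (u @ prefix w (Suc j)) \<in> delta B (g (u @ prefix w j)) (w j)"
      using strategy_step[OF assms(1), of "u @ prefix w j" "w j"] assms(3)
      by (simp add: prefix_Suc word_def)
    then show ?thesis
      using safe[of j] by (simp add: delta_nacc_def)
  qed
  moreover have "g (u @ prefix w 0) = g u"
    by (simp add: prefix_def)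
  ultimately show ?thesis
    using assms(3) unfolding safe_lang_def
    by (intro CollectI conjI exI[of _ "\<lambda>j. g (u @ prefix w j)"]) auto
qed

lemma safe_cycle_forcing_acc:
  fixes A :: "('q, 'a) tNCW" and B :: "('p, 'a) tNCW"
  assumes "wf_tNCW A" "alphabet A = alphabet B" "normal A" "p \<in> states A"
    and g: "strategy B x g" and u: "set u \<subseteq> alphabet B"
    and not_safe: "\<not> safe_lang A p \<subseteq> safe_lang B (g u)"
  obtains e j where "e \<noteq> []" "safe_path A p e p" "j < length e"
    "(g (u @ take j e), e ! j, g (u @ take (Suc j) e)) \<in> acc B"
proof -
  obtain w where w: "w \<in> safe_lang A p" "w \<notin> safe_lang B (g u)"
    using not_safe by blast
  then obtain r where r: "word A w" "r 0 = p" "\<forall>i. r (Suc i) \<in> delta_nacc A (r i) (w i)"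
    by (auto simp: safe_lang_def)
  have "word B w"
    using r(1) assms(2) by (simp add: word_def)
  then obtain j where j: "(g (u @ prefix w j), w j, g (u @ prefix w (Suc j))) \<in> acc B"
    using strategy_safe_run_in_safe_lang[OF g u] w(2) by blast
  have to_rj: "safe_path A p (prefix w (Suc j)) (r (Suc j))"
    using safe_run_safe_path[OF r(2,3,1)] .
  then have "(p, r (Suc j)) \<in> (nacc_edges A)\<^sup>*"
    by (rule safe_path_rtrancl_nacc_edges[OF assms(1,4)])
  then obtain v where to_p: "safe_path A (r (Suc j)) v p"
    using normalD[OF assms(3)] rtrancl_nacc_edges_safe_path by metis
  define e where "e = prefix w (Suc j) @ v"
  have "safe_path A p e p"
    unfolding e_def path_append using to_rj to_p by blast
  moreover have "take j e = prefix w j" "take (Suc j) e = prefix w (Suc j)" "e ! j = w j"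
    "j < length e"
    by (simp_all add: e_def prefix_Suc nth_append)
  ultimately show thesis
    using j by (intro that[of e j]) auto
qed

lemma strategy_not_accepting_chain_word:
  assumes V0: "V 0 = []" and VS: "\<And>n. V (Suc n) = V n @ e n" and e: "\<And>n. e n \<noteq> []"
    and acc: "\<And>n. \<exists>j < length (e n).
      (g (u @ V n @ take j (e n)), e n ! j, g (u @ V n @ take (Suc j) (e n))) \<in> acc B"
  shows "\<not> accepting B (u \<frown> chain_word V) (\<lambda>i. g (prefix (u \<frown> chain_word V) i))"
proof -
  define W where "W = u \<frown> chain_word V"
  have prefix_W: "prefix W (length u + m) = u @ take m (V k)" if "m \<le> length (V k)" for m k
    unfolding W_def prefix_conc prefix_chain_word[OF V0 VS e that] ..
  have "\<exists>i \<ge> n. (g (prefix W i), W i, g (prefix W (Suc i))) \<in> acc B" for n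
  proof -
    obtain j where j: "j < length (e n)"
      "(g (u @ V n @ take j (e n)), e n ! j, g (u @ V n @ take (Suc j) (e n))) \<in> acc B"
      using acc by blast
    define i where "i = length u + (length (V n) + j)"
    have "length (V n) + Suc j \<le> length (V (Suc n))"
      using j(1) by (simp add: VS)
    then have pre: "prefix W i = u @ V n @ take j (e n)"
      "prefix W (Suc i) = u @ V n @ take (Suc j) (e n)"
      using prefix_W[of "length (V n) + j" "Suc n"] prefix_W[of "length (V n) + Suc j" "Suc n"]
      by (simp_all add: i_def VS)
    have "W i = prefix W (Suc i) ! i"
      by (simp add: prefix_Suc nth_append)
    also have "\<dots> = e n ! j"
      using pre(2) j(1) by (simp add: i_def nth_append)
    finally have "W i = e n ! j" .
    moreover have "i \<ge> n"
      using length_chain_ge[OF V0 VS e, of n] by (simp add: i_def)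
    ultimately show ?thesis
      using j(2) pre by auto
  qed
  then have "\<exists>\<^sub>\<infinity>i. (g (prefix W i), W i, g (prefix W (Suc i))) \<in> acc B"
    unfolding INFM_nat_le by blast
  then show ?thesis
    by (simp add: accepting_def W_def INFM_iff_infinite)
qed

lemma strategy_lang_from:
  assumes "wf_tNCW B" "sem_det B" "strategy B (init B) g" "set u \<subseteq> alphabet B"
  shows "lang_from B (g u) = {w. u \<frown> w \<in> lang B}"
proof -
  have "init B \<in> states B"
    using assms(1) by (simp add: wf_tNCW_def)
  then show ?thesis
    using lang_from_trans_path[OF assms(2,1) _ strategy_trans_path[OF assms(3,4)]]
    by (simp add: lang_def)
qed

lemma chain_of_extensions:
  assumes "Q []" and extend: "\<And>v. Q v \<Longrightarrow> \<exists>e. P v e \<and> Q (v @ e)"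
  obtains V e where "V 0 = []" "\<And>n. V (Suc n) = V n @ e n" "\<And>n. P (V n) (e n)"
proof -
  define ext where "ext v = (SOME e. P v e \<and> Q (v @ e))" for v
  define V where "V = rec_nat [] (\<lambda>_ v. v @ ext v)"
  have V0: "V 0 = []" and VS: "V (Suc n) = V n @ ext (V n)" for n
    by (simp_all add: V_def)
  have ext: "P v (ext v) \<and> Q (v @ ext v)" if "Q v" for v
    unfolding ext_def using someI_ex[OF extend[OF that]] .
  have "Q (V n)" for n
    by (induction n) (use assms(1) ext in \<open>simp_all add: V0 VS\<close>)
  then show thesis
    using that[OF V0 VS] ext by blast
qed

lemma safe_lang_dominated:
  fixes A :: "('q, 'a) tNCW" and B :: "('p, 'a) tNCW"
  assumes wfA: "wf_tNCW A" and wfB: "wf_tNCW B" and alph: "alphabet A = alphabet B"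
    and niceA: "nice A" and gfgB: "GFG B" and semB: "sem_det B" and lang: "lang A = lang B"
    and p: "p \<in> states A"
  shows "\<exists>y \<in> states B. lang_from A p = lang_from B y \<and> safe_lang A p \<subseteq> safe_lang B y"
proof (rule ccontr)
  assume not_dominated: "\<not> ?thesis"
  have A: "normal A" "safe_det A" "sem_det A" "(init A, p) \<in> (all_edges A)\<^sup>*"
    using niceA p by (auto simp: nice_def)
  obtain g where g: "strategy B (init B) g"
    and g_acc: "\<And>w. w \<in> lang B \<Longrightarrow> accepting B w (\<lambda>i. g (prefix w i))"
    using gfgB by (auto simp: GFG_def GFG_state_iff lang_def)
  have initA: "init A \<in> states A" and initB: "init B \<in> states B"
    using wfA wfB by (auto simp: wf_tNCW_def)
  obtain u0 where u0: "trans_path A (init A) u0 p"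
    using rtrancl_all_edges_trans_path A(4) by metis
  have lang_p: "lang_from A p = {w. u0 \<frown> w \<in> lang A}"
    using lang_from_trans_path[OF A(3) wfA initA u0] by (simp add: lang_def)
  define P where "P v e \<longleftrightarrow> e \<noteq> [] \<and> safe_path A p e p \<and>
      (\<exists>j < length e. (g (u0 @ v @ take j e), e ! j, g (u0 @ v @ take (Suc j) e)) \<in> acc B)" for v e
  have "\<exists>e. P v e \<and> safe_path A p (v @ e) p" if v: "safe_path A p v p" for v
  proof -
    have uv: "set (u0 @ v) \<subseteq> alphabet B"
      using path_set[OF u0] path_set[OF v] alph by auto
    have "trans_path A (init A) (u0 @ v) p"
      unfolding path_append using u0 safe_path_trans_path[OF v] by blast
    then have "lang_from A p = lang_from B (g (u0 @ v))"
      using lang_from_trans_path[OF A(3) wfA initA] lang strategy_lang_from[OF wfB semB g uv]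
      by (simp add: lang_def)
    then have "\<not> safe_lang A p \<subseteq> safe_lang B (g (u0 @ v))"
      using not_dominated strategy_states[OF wfB initB g uv] by blast
    then obtain e j where e: "e \<noteq> []" "safe_path A p e p" "j < length e"
      "(g ((u0 @ v) @ take j e), e ! j, g ((u0 @ v) @ take (Suc j) e)) \<in> acc B"
      by (rule safe_cycle_forcing_acc[OF wfA alph A(1) p g uv])
    moreover have "safe_path A p (v @ e) p"
      unfolding path_append using v e(2) by blast
    ultimately show ?thesis
      unfolding P_def by (intro exI[of _ e]) auto
  qed
  then obtain V e where V0: "V 0 = []" and VS: "\<And>n. V (Suc n) = V n @ e n"
    and P: "\<And>n. P (V n) (e n)"
    using chain_of_extensions[of "\<lambda>v. safe_path A p v p" P] by auto
  have "chain_word V \<in> safe_lang A p"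
    using chain_word_in_safe_lang[OF wfA A(2) p V0 VS] P unfolding P_def by blast
  then have "u0 \<frown> chain_word V \<in> lang B"
    using safe_lang_subset_lang_from[of A p] lang_p lang by blast
  moreover have "\<not> accepting B (u0 \<frown> chain_word V) (\<lambda>i. g (prefix (u0 \<frown> chain_word V) i))"
    using strategy_not_accepting_chain_word[OF V0 VS] P unfolding P_def by blast
  ultimately show False
    using g_acc by blast
qed

section \<open>Redirecting a state\<close>

lemma suffix_in_safe_lang:
  assumes "word A w" "\<forall>i \<ge> k. r (Suc i) \<in> delta_nacc A (r i) (w i)"
  shows "suffix k w \<in> safe_lang A (r k)"
proof -
  have "\<forall>i. r (Suc i + k) \<in> delta_nacc A (r (i + k)) (suffix k w i)"
    using assms(2) by (simp add: add.commute)
  then show ?thesis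
    unfolding safe_lang_def using assms(1)
    by (intro CollectI conjI exI[of _ "\<lambda>j. r (j + k)"]) (simp_all add: word_def)
qed

definition redirect_state :: "'q \<Rightarrow> 'q \<Rightarrow> 'q \<Rightarrow> 'q" where
  "redirect_state p q x = (if x = p then q else x)"

definition redirect :: "('q, 'a) tNCW \<Rightarrow> 'q \<Rightarrow> 'q \<Rightarrow> ('q, 'a) tNCW" where
  "redirect A p q =
    \<lparr>states = states A - {p}, alphabet = alphabet A, init = redirect_state p q (init A),
     delta = (\<lambda>x a. redirect_state p q ` delta A x a),
     acc = {(x, a, y). x \<in> states A - {p} \<and> a \<in> alphabet A \<and> y \<in> redirect_state p q ` delta A x a
              \<and> y \<notin> redirect_state p q ` delta_nacc A x a}\<rparr>"

lemma redirect_simps [simp]: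
  "states (redirect A p q) = states A - {p}"
  "alphabet (redirect A p q) = alphabet A"
  "init (redirect A p q) = redirect_state p q (init A)"
  "delta (redirect A p q) x a = redirect_state p q ` delta A x a"
  by (simp_all add: redirect_def)

lemma acc_redirect:
  "acc (redirect A p q) = {(x, a, y). x \<in> states A - {p} \<and> a \<in> alphabet A
     \<and> y \<in> redirect_state p q ` delta A x a \<and> y \<notin> redirect_state p q ` delta_nacc A x a}"
  by (simp add: redirect_def)

locale redirection =
  fixes A :: "('q, 'a) tNCW" and p q :: 'q
  assumes wf: "wf_tNCW A" and nice: "nice A" and alpha_max: "alpha_maximal A" and gfg: "GFG A"
    and p: "p \<in> states A" and q: "q \<in> states A" and p_neq_q: "p \<noteq> q"
    and lang_p_q: "lang_from A p = lang_from A q"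
    and safe_p_q: "safe_lang A p \<subseteq> safe_lang A q"
begin

abbreviation "A' \<equiv> redirect A p q"
abbreviation "m \<equiv> redirect_state p q"

lemma normal: "normal A" and safe_det: "safe_det A" and sem_det: "sem_det A"
  using nice by (auto simp: nice_def)

lemma m_states: "x \<in> states A \<Longrightarrow> m x \<in> states A - {p}"
  using q p_neq_q by (auto simp: redirect_state_def)

lemma lang_from_m: "lang_from A (m x) = lang_from A x"
  using lang_p_q by (auto simp: redirect_state_def)

lemma safe_lang_m: "safe_lang A x \<subseteq> safe_lang A (m x)"
  using safe_p_q by (auto simp: redirect_state_def)

lemma wf_redirect: "wf_tNCW A'"
proof -
  have "m ` delta A x a \<subseteq> states A - {p}" if "x \<in> states A" "a \<in> alphabet A" for x a
    using m_states delta_states[OF wf that] by (auto simp: image_subset_iff)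
  moreover have "delta A x a \<noteq> {}" if "x \<in> states A" "a \<in> alphabet A" for x a
    using delta_nonempty[OF wf that] .
  moreover have "acc A' \<subseteq> trans_rel A'"
    by (auto simp: acc_redirect trans_rel_def)
  moreover have "init A' \<in> states A'" "finite (states A')" "finite (alphabet A')"
    using wf m_states by (auto simp: wf_tNCW_def)
  ultimately show ?thesis
    unfolding wf_tNCW_def redirect_simps by blast
qed

lemma card_redirect: "card (states A') < card (states A)"
  unfolding redirect_simps by (rule card_Diff1_less) (use wf p in \<open>auto simp: wf_tNCW_def\<close>)

lemma delta_nacc_redirect:
  "x \<in> states A - {p} \<Longrightarrow> a \<in> alphabet A \<Longrightarrow> delta_nacc A' x a = m ` delta_nacc A x a"
  unfolding delta_nacc_def[of A'] using delta_nacc_subset[of A x a] by (auto simp: acc_redirect)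

lemma lang_from_if_suffix:
  assumes r: "run_from A' x w r" and x: "x \<in> states A'" and w: "word A w"
  shows "suffix k w \<in> lang_from A (r k) \<Longrightarrow> w \<in> lang_from A x"
proof (induction k)
  case 0
  then show ?case
    using r by (simp add: run_from_def)
next
  case (Suc k)
  have "r k \<in> states A"
    using run_states[OF wf_redirect x _ r, of k] w by (simp add: word_def)
  obtain b where b: "b \<in> delta A (r k) (w k)" "r (Suc k) = m b"
    using r by (auto simp: run_from_def)
  have "suffix (Suc k) w \<in> lang_from A b"
    using Suc.prems unfolding b(2) lang_from_m .
  then have "w k ## suffix (Suc k) w \<in> lang_from A (r k)"
    using build_in_lang_from[OF _ b(1)] w by (simp only: word_def)
  then have "suffix k w \<in> lang_from A (r k)"
    by simp
  then show ?case
    by (rule Suc.IH)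
qed

lemma safe_suffix_if_safe_langs_eq:
  assumes r: "run_from A' x w r" and x: "x \<in> states A'" and w: "word A w"
    and safe: "\<forall>i\<ge>k. r (Suc i) \<in> m ` delta_nacc A (r i) (w i)"
    and safe_q_p: "safe_lang A q \<subseteq> safe_lang A p"
  shows "suffix k w \<in> safe_lang A (r k)"
proof -
  have r_states: "r i \<in> states A - {p}" for i
    using run_states[OF wf_redirect x _ r] w by (simp add: word_def)
  have letters: "w i \<in> alphabet A" for i
    using w by (simp add: word_def)
  have "strongly_equiv A p A q"
    using lang_p_q subset_antisym[OF safe_p_q safe_q_p] by (simp add: strongly_equiv_def)
  then have equiv_m: "strongly_equiv A b A (m b)" for b
    by (cases "b = p") (simp_all add: strongly_equiv_def redirect_state_def)
  have "\<exists>y \<in> states A. safe_path A (r k) (prefix (suffix k w) n) y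
      \<and> strongly_equiv A y A (r (k + n))"
    for n
  proof (induction n)
    case 0
    show ?case
      using r_states by (auto simp: prefix_def strongly_equiv_def)
  next
    case (Suc n)
    then obtain y where y: "y \<in> states A" "safe_path A (r k) (prefix (suffix k w) n) y"
      and y_equiv': "strongly_equiv A y A (r (k + n))"
      by blast
    have y_equiv: "strongly_equiv A (r (k + n)) A y"
      using strongly_equiv_sym[OF y_equiv'] .
    obtain b where b: "b \<in> delta_nacc A (r (k + n)) (w (k + n))" "r (Suc (k + n)) = m b"
      using safe[rule_format, of "k + n"] by auto
    obtain y' where y': "y' \<in> delta_nacc A y (w (k + n))" "y' \<in> states A" "strongly_equiv A b A y'"
      using strongly_equiv_safe_successor[OF wf wf refl normal safe_det sem_det safe_det sem_det _ y(1)
          y_equiv letters b(1)] r_states by blast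
    have "safe_path A (r k) (prefix (suffix k w) (Suc n)) y'"
      using y(2) y'(1) letters by (auto simp: prefix_Suc path_snoc)
    moreover have "strongly_equiv A y' A (r (k + Suc n))"
      using strongly_equiv_trans[OF strongly_equiv_sym[OF y'(3)] equiv_m] b(2) by simp
    ultimately show ?case
      using y'(2) by blast
  qed
  moreover have "word A (suffix k w)"
    using letters by (simp add: word_def)
  ultimately show ?thesis
    using safe_lang_if_safe_prefixes[OF wf safe_det] r_states by blast
qed

lemma redirected_safe_step:
  assumes "x \<in> states A" "a \<in> alphabet A" "y \<in> m ` delta_nacc A x a"
  shows "p \<in> delta_nacc A x a \<Longrightarrow> y = q" and "p \<notin> delta_nacc A x a \<Longrightarrow> y \<in> delta_nacc A x a"
proof -
  obtain b where b: "b \<in> delta_nacc A x a" "y = m b"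
    using assms(3) by blast
  show "p \<in> delta_nacc A x a \<Longrightarrow> y = q"
    using b safe_det_unique[OF wf safe_det assms(1,2) b(1)] by (simp add: redirect_state_def)
  show "p \<notin> delta_nacc A x a \<Longrightarrow> y \<in> delta_nacc A x a"
    using b by (auto simp: redirect_state_def)
qed

lemma safe_suffix_if_not_reaching:
  assumes r: "run_from A' x w r" and x: "x \<in> states A'" and w: "word A w"
    and safe: "\<forall>i\<ge>k. r (Suc i) \<in> m ` delta_nacc A (r i) (w i)"
    and not_reach: "(q, p) \<notin> (nacc_edges A)\<^sup>*"
  obtains k' where "suffix k' w \<in> safe_lang A (r k')"
proof -
  have r_states: "r i \<in> states A - {p}" for i
    using run_states[OF wf_redirect x _ r] w by (simp add: word_def)
  have letters: "w i \<in> alphabet A" for i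
    using w by (simp add: word_def)
  define J where "J i \<longleftrightarrow> p \<in> delta_nacc A (r i) (w i)" for i
  have step: "r i \<in> states A" "w i \<in> alphabet A" "r (Suc i) \<in> m ` delta_nacc A (r i) (w i)"
    if "i \<ge> k" for i
    using r_states letters safe that by auto
  have to_q: "r (Suc i) = q" if "i \<ge> k" "J i" for i
    using redirected_safe_step(1)[OF step[OF that(1)]] that(2) unfolding J_def .
  have follows_A: "r (Suc i) \<in> delta_nacc A (r i) (w i)" if "i \<ge> k" "\<not> J i" for i
    using redirected_safe_step(2)[OF step[OF that(1)]] that(2) unfolding J_def .
  have not_J_if_reached: "\<not> J j" if reach: "(q, r j) \<in> (nacc_edges A)\<^sup>*" for j
  proof
    assume "J j"
    then have "(r j, p) \<in> nacc_edges A"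
      using r_states letters unfolding J_def nacc_edges_def by blast
    then show False
      using reach not_reach by (meson rtrancl.rtrancl_into_rtrancl)
  qed
  txt \<open>After a redirection to \<open>q\<close> the run stays in the safe component of \<open>q\<close>, which does not
    reach \<open>p\<close>; so there is at most one redirection after step \<open>k\<close>.\<close>
  have reached: "(q, r j) \<in> (nacc_edges A)\<^sup>*" if i: "k \<le> i" "J i" and "i < j" for i j
    using \<open>i < j\<close>
  proof (induction j)
    case (Suc j)
    show ?case
    proof (cases "j = i")
      case False
      then have "(q, r j) \<in> (nacc_edges A)\<^sup>*"
        using Suc by simp
      moreover have "r (Suc j) \<in> delta_nacc A (r j) (w j)"
        using follows_A not_J_if_reached[OF calculation] Suc.prems i(1) by simp
      then have "(r j, r (Suc j)) \<in> nacc_edges A"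
        using r_states letters unfolding nacc_edges_def by blast
      ultimately show ?thesis
        by (rule rtrancl_into_rtrancl)
    qed (use to_q i in simp)
  qed simp
  have "\<exists>k'. \<forall>i \<ge> k'. r (Suc i) \<in> delta_nacc A (r i) (w i)"
  proof (cases "\<exists>i\<ge>k. J i")
    case True
    then obtain i where "i \<ge> k" "J i"
      by blast
    then have "\<forall>j \<ge> Suc i. r (Suc j) \<in> delta_nacc A (r j) (w j)"
      using follows_A not_J_if_reached reached by (simp add: Suc_le_eq)
    then show ?thesis
      by blast
  qed (use follows_A in blast)
  then show thesis
    using suffix_in_safe_lang[OF w] that by blast
qed

end

text \<open>The strategy of the redirected automaton shadows a strategy \<open>f\<close> of \<open>A\<close>: when \<open>f\<close>
  takes a safe transition, it takes its own unique safe transition; otherwise it moves to the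
  redirected target of \<open>f\<close>, which \<open>\<alpha>\<close>-maximality makes available.\<close>
definition shadow_step :: "('q, 'a) tNCW \<Rightarrow> 'q \<Rightarrow> 'q \<Rightarrow> 'q \<Rightarrow> 'q \<Rightarrow> 'a \<Rightarrow> 'q \<Rightarrow> 'q" where
  "shadow_step A p q y s a s' =
    (if s' \<in> delta_nacc A s a then redirect_state p q (THE y'. y' \<in> delta_nacc A y a)
     else redirect_state p q s')"

text \<open>The input word is given reversed, so that its last letter is at the head of the list.\<close>
fun shadow_rev :: "('q, 'a) tNCW \<Rightarrow> 'q \<Rightarrow> 'q \<Rightarrow> ('a list \<Rightarrow> 'q) \<Rightarrow> 'a list \<Rightarrow> 'q" where
  "shadow_rev A p q f [] = redirect_state p q (init A)"
| "shadow_rev A p q f (a # v) =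
    shadow_step A p q (shadow_rev A p q f v) (f (rev v)) a (f (rev v @ [a]))"

context redirection
begin

lemma lang_redirect_subset:
  assumes "(q, p) \<notin> (nacc_edges A)\<^sup>* \<or> safe_lang A q \<subseteq> safe_lang A p"
  shows "lang A' \<subseteq> lang A"
proof
  fix w assume "w \<in> lang A'"
  then obtain r where wA': "word A' w" and r: "run_from A' (init A') w r"
    and acc: "accepting A' w r"
    by (auto simp: lang_def lang_from_def)
  have w: "word A w"
    using wA' by (simp add: word_def)
  have init': "init A' \<in> states A'"
    using wf_redirect by (simp add: wf_tNCW_def)
  have r_states: "r i \<in> states A - {p}" for i
    using run_states[OF wf_redirect init' wA' r] by simp
  have "\<forall>\<^sub>\<infinity>i. (r i, w i, r (Suc i)) \<notin> acc A'"
    using acc unfolding accepting_def MOST_iff_finiteNeg not_not .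
  then obtain k where k: "\<forall>i\<ge>k. (r i, w i, r (Suc i)) \<notin> acc A'"
    unfolding MOST_nat_le by blast
  have "\<forall>i\<ge>k. r (Suc i) \<in> m ` delta_nacc A (r i) (w i)"
  proof (intro allI impI)
    fix i assume "k \<le> i"
    moreover have "r (Suc i) \<in> delta A' (r i) (w i)"
      using r by (simp add: run_from_def)
    ultimately have "r (Suc i) \<in> delta_nacc A' (r i) (w i)"
      using k by (simp add: delta_nacc_def)
    then show "r (Suc i) \<in> m ` delta_nacc A (r i) (w i)"
      using delta_nacc_redirect r_states w by (simp add: word_def)
  qed
  then obtain k' where "suffix k' w \<in> safe_lang A (r k')"
    using assms safe_suffix_if_not_reaching[OF r init' w] safe_suffix_if_safe_langs_eq[OF r init' w]
    by blast
  then have "suffix k' w \<in> lang_from A (r k')"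
    using safe_lang_subset_lang_from[of A "r k'"] by blast
  then have "w \<in> lang_from A (init A')"
    by (rule lang_from_if_suffix[OF r init' w])
  then show "w \<in> lang A"
    using lang_from_m by (simp add: lang_def)
qed

lemma shadow_step_safe:
  assumes y: "y \<in> states A" and s: "s \<in> states A"
    and lang: "lang_from A s = lang_from A y" and safe: "safe_lang A s \<subseteq> safe_lang A y"
    and a: "a \<in> alphabet A" and s': "s' \<in> delta_nacc A s a"
  obtains t where "t \<in> delta_nacc A y a" "shadow_step A p q y s a s' = m t"
    "lang_from A s' = lang_from A t" "safe_lang A s' \<subseteq> safe_lang A t"
proof -
  obtain t where t: "t \<in> delta_nacc A y a" "lang_from A s' = lang_from A t"
    "safe_lang A s' = {v. a ## v \<in> safe_lang A s}" "safe_lang A t = {v. a ## v \<in> safe_lang A y}"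
    using safe_successor_match[OF wf wf refl normal safe_det sem_det safe_det sem_det s y
        lang safe a s'] .
  have "(THE y'. y' \<in> delta_nacc A y a) = t"
    using t(1) safe_det_unique[OF wf safe_det y a] by blast
  then have "shadow_step A p q y s a s' = m t"
    using s' by (simp add: shadow_step_def)
  moreover have "safe_lang A s' \<subseteq> safe_lang A t"
    using t(3,4) safe by blast
  ultimately show thesis
    using that t(1,2) by blast
qed

lemma shadow_step_unsafe:
  assumes y: "y \<in> states A" and s: "s \<in> states A"
    and lang: "lang_from A s = lang_from A y" and a: "a \<in> alphabet A" and s': "s' \<in> delta A s a"
  shows "s' \<in> delta A y a"
proof -
  obtain t where t: "t \<in> delta A y a"
    using delta_nonempty[OF wf y a] by blast
  have "lang_from A t = lang_from A s'"
    using lang_from_residual[OF sem_det y a t] lang_from_residual[OF sem_det s a s'] lang by simp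
  then have "allowed A y a s'"
    using y a s' t delta_states[OF wf y a] delta_states[OF wf s a]
    by (auto simp: allowed_def equiv_st_def trans_rel_def)
  then show ?thesis
    using alpha_max by (simp add: alpha_maximal_def trans_rel_def)
qed

lemma shadow_step_sound:
  assumes y: "y \<in> states A - {p}" and s: "s \<in> states A"
    and lang: "lang_from A s = lang_from A y" and safe: "safe_lang A s \<subseteq> safe_lang A y"
    and a: "a \<in> alphabet A" and s': "s' \<in> delta A s a"
  defines "y' \<equiv> shadow_step A p q y s a s'"
  shows "y' \<in> states A - {p} \<and> y' \<in> delta A' y a \<and> lang_from A s' = lang_from A y'
    \<and> safe_lang A s' \<subseteq> safe_lang A y' \<and> (s' \<in> delta_nacc A s a \<longrightarrow> (y, a, y') \<notin> acc A')"
proof (cases "s' \<in> delta_nacc A s a")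
  case True
  obtain t where t: "t \<in> delta_nacc A y a" "y' = m t"
    "lang_from A s' = lang_from A t" "safe_lang A s' \<subseteq> safe_lang A t"
    using shadow_step_safe[OF _ s lang safe a True] y unfolding y'_def by blast
  moreover have "t \<in> delta A y a" "t \<in> states A"
    using t(1) delta_nacc_subset[of A y a] delta_nacc_states[OF wf _ a, of y] y by auto
  moreover have "(y, a, m t) \<notin> acc A'"
    using t(1) by (simp add: acc_redirect)
  ultimately show ?thesis
    using m_states lang_from_m safe_lang_m[of t] by auto
next
  case False
  then have "y' = m s'"
    by (simp add: y'_def shadow_step_def)
  moreover have "s' \<in> states A"
    using s' delta_states[OF wf s a] by blast
  moreover have "s' \<in> delta A y a"
    using shadow_step_unsafe[OF _ s lang a s'] y by blast
  ultimately show ?thesis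
    using m_states lang_from_m safe_lang_m False by auto
qed

definition shadow :: "('a list \<Rightarrow> 'q) \<Rightarrow> 'a list \<Rightarrow> 'q" where
  "shadow f u = shadow_rev A p q f (rev u)"

lemma shadow_Nil: "shadow f [] = m (init A)"
  and shadow_snoc: "shadow f (u @ [a]) = shadow_step A p q (shadow f u) (f u) a (f (u @ [a]))"
  by (simp_all add: shadow_def)

lemma shadow_invariant:
  assumes f: "strategy A (init A) f" and "set u \<subseteq> alphabet A"
  shows "shadow f u \<in> states A - {p} \<and> lang_from A (f u) = lang_from A (shadow f u)
    \<and> safe_lang A (f u) \<subseteq> safe_lang A (shadow f u)"
  using assms(2)
proof (induction u rule: rev_induct)
  case Nil
  have "init A \<in> states A"
    using wf by (simp add: wf_tNCW_def)
  then show ?case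
    using f m_states lang_from_m safe_lang_m by (simp add: shadow_Nil strategy_def)
next
  case (snoc a u)
  then have "set u \<subseteq> alphabet A" "a \<in> alphabet A"
    by auto
  moreover have "init A \<in> states A"
    using wf by (simp add: wf_tNCW_def)
  ultimately show ?case
    using shadow_step_sound[of "shadow f u" "f u" a "f (u @ [a])"] snoc.IH strategy_states[OF wf _ f]
      strategy_step[OF f] by (simp add: shadow_snoc)
qed

lemma shadow_transition:
  assumes f: "strategy A (init A) f" and u: "set u \<subseteq> alphabet A" and a: "a \<in> alphabet A"
  shows "(shadow f u, a, shadow f (u @ [a])) \<in> trans_rel A'"
    and "(shadow f u, a, shadow f (u @ [a])) \<in> acc A' \<Longrightarrow> (f u, a, f (u @ [a])) \<in> acc A"
proof -
  have "init A \<in> states A"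
    using wf by (simp add: wf_tNCW_def)
  then have "f u \<in> states A"
    using strategy_states[OF wf _ f u] by blast
  moreover have f_step: "f (u @ [a]) \<in> delta A (f u) a"
    using strategy_step[OF f u a] .
  ultimately have step: "shadow f (u @ [a]) \<in> delta A' (shadow f u) a"
    "f (u @ [a]) \<in> delta_nacc A (f u) a \<Longrightarrow> (shadow f u, a, shadow f (u @ [a])) \<notin> acc A'"
    using shadow_step_sound[of "shadow f u" "f u" a "f (u @ [a])"] shadow_invariant[OF f u] a
    by (simp_all add: shadow_snoc)
  show "(shadow f u, a, shadow f (u @ [a])) \<in> trans_rel A'"
    using step(1) shadow_invariant[OF f u] a by (simp add: trans_rel_def)
  assume "(shadow f u, a, shadow f (u @ [a])) \<in> acc A'"
  then show "(f u, a, f (u @ [a])) \<in> acc A"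
    using step(2) f_step by (auto simp: delta_nacc_def)
qed

lemma shadow_accepting:
  assumes f: "strategy A (init A) f" and w: "word A w"
    and f_acc: "accepting A w (\<lambda>i. f (prefix w i))"
  shows "run_from A' (init A') w (\<lambda>i. shadow f (prefix w i))"
    and "accepting A' w (\<lambda>i. shadow f (prefix w i))"
proof -
  note step = shadow_transition[OF f set_prefix_subset[OF w]]
  show "run_from A' (init A') w (\<lambda>i. shadow f (prefix w i))"
    using step(1) w
    by (simp add: run_from_def prefix_Suc word_def trans_rel_def prefix_def shadow_Nil)
  have "{i. (shadow f (prefix w i), w i, shadow f (prefix w (Suc i))) \<in> acc A'}
      \<subseteq> {i. (f (prefix w i), w i, f (prefix w (Suc i))) \<in> acc A}"
    using step(2) w by (auto simp: prefix_Suc word_def)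
  then show "accepting A' w (\<lambda>i. shadow f (prefix w i))"
    using f_acc finite_subset unfolding accepting_def by blast
qed

lemma GFG_lang_redirect:
  assumes "(q, p) \<notin> (nacc_edges A)\<^sup>* \<or> safe_lang A q \<subseteq> safe_lang A p"
  shows "GFG A'" and "lang A' = lang A"
proof -
  obtain f where f: "strategy A (init A) f"
    and f_acc: "\<And>w. w \<in> lang A \<Longrightarrow> accepting A w (\<lambda>i. f (prefix w i))"
    using gfg by (auto simp: GFG_def GFG_state_iff lang_def)
  have "lang A \<subseteq> lang A'"
  proof
    fix w assume w: "w \<in> lang A"
    then have "word A w"
      by (simp add: lang_def lang_from_def)
    then show "w \<in> lang A'"
      using shadow_accepting[OF f _ f_acc[OF w]] by (auto simp: lang_def lang_from_def word_def)
  qed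
  then show lang_eq: "lang A' = lang A"
    using lang_redirect_subset[OF assms] by blast
  have "strategy A' (init A') (shadow f)"
    using shadow_transition(1)[OF f] shadow_Nil by (simp add: strategy_def)
  then show "GFG A'"
    using shadow_accepting(2)[OF f] f_acc lang_eq unfolding GFG_def GFG_state_iff
    by (auto simp: lang_def lang_from_def)
qed

end

section \<open>Minimality\<close>

definition rename :: "('q \<Rightarrow> 'p) \<Rightarrow> ('q, 'a) tNCW \<Rightarrow> ('p, 'a) tNCW" where
  "rename \<phi> X =
    \<lparr>states = \<phi> ` states X, alphabet = alphabet X, init = \<phi> (init X),
     delta = (\<lambda>k a. \<phi> ` delta X (inv_into (states X) \<phi> k) a),
     acc = (\<lambda>(x, a, y). (\<phi> x, a, \<phi> y)) ` acc X\<rparr>"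

locale renaming =
  fixes X :: "('q, 'a) tNCW" and \<phi> :: "'q \<Rightarrow> 'p"
  assumes wf: "wf_tNCW X" and inj: "inj_on \<phi> (states X)"
begin

abbreviation "Y \<equiv> rename \<phi> X"

lemma rename_simps [simp]:
  "states Y = \<phi> ` states X" "alphabet Y = alphabet X" "init Y = \<phi> (init X)"
  "x \<in> states X \<Longrightarrow> delta Y (\<phi> x) a = \<phi> ` delta X x a"
  using inj by (simp_all add: rename_def)

lemma acc_rename_iff:
  assumes "x \<in> states X" "y \<in> states X"
  shows "(\<phi> x, a, \<phi> y) \<in> acc Y \<longleftrightarrow> (x, a, y) \<in> acc X"
proof
  assume "(\<phi> x, a, \<phi> y) \<in> acc Y"
  then obtain x' y' where xy': "(x', a, y') \<in> acc X" "\<phi> x = \<phi> x'" "\<phi> y = \<phi> y'"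
    by (auto simp: rename_def)
  moreover have "acc X \<subseteq> trans_rel X"
    using wf by (simp add: wf_tNCW_def)
  ultimately have "x' \<in> states X" "y' \<in> states X"
    using delta_states[OF wf] by (auto simp: trans_rel_def)
  then have "x' = x" "y' = y"
    using xy'(2,3) inj assms unfolding inj_on_def by metis+
  then show "(x, a, y) \<in> acc X"
    using xy'(1) by simp
qed (force simp: rename_def)

lemma delta_rename_iff:
  assumes "x \<in> states X" "y \<in> states X" "a \<in> alphabet X"
  shows "\<phi> y \<in> delta Y (\<phi> x) a \<longleftrightarrow> y \<in> delta X x a"
  using assms delta_states[OF wf assms(1,3)] inj by (auto simp: inj_on_def)

lemma wf_rename: "wf_tNCW Y"
proof -
  have "delta Y k a \<subseteq> states Y \<and> delta Y k a \<noteq> {}"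
    if k: "k \<in> states Y" and a: "a \<in> alphabet Y" for k a
  proof -
    obtain x where "x \<in> states X" "k = \<phi> x" "a \<in> alphabet X"
      using k a by auto
    then show ?thesis
      using delta_states[OF wf] delta_nonempty[OF wf] by (simp add: image_mono)
  qed
  moreover have "acc Y \<subseteq> trans_rel Y"
  proof
    fix t assume "t \<in> acc Y"
    then obtain x a y where t: "t = (\<phi> x, a, \<phi> y)" "(x, a, y) \<in> acc X"
      by (auto simp: rename_def)
    then have "x \<in> states X" "a \<in> alphabet X" "y \<in> delta X x a"
      using wf by (auto simp: wf_tNCW_def trans_rel_def)
    then show "t \<in> trans_rel Y"
      using t(1) by (auto simp: trans_rel_def)
  qed
  ultimately show ?thesis
    using wf by (simp add: wf_tNCW_def)
qed

lemma lang_from_rename: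
  assumes x: "x \<in> states X"
  shows "lang_from Y (\<phi> x) = lang_from X x"
proof
  show "lang_from X x \<subseteq> lang_from Y (\<phi> x)"
  proof
    fix w assume "w \<in> lang_from X x"
    then obtain r where w: "word X w" and r: "run_from X x w r" and acc: "accepting X w r"
      by (auto simp: lang_from_def)
    have r_states: "r i \<in> states X" for i
      using run_states[OF wf x w r] .
    have "run_from Y (\<phi> x) w (\<phi> \<circ> r)"
      using r r_states by (simp add: run_from_def)
    moreover have "accepting Y w (\<phi> \<circ> r)"
      using acc acc_rename_iff[OF r_states r_states] by (simp add: accepting_def)
    ultimately show "w \<in> lang_from Y (\<phi> x)"
      using w by (auto simp: lang_from_def word_def)
  qed
  show "lang_from Y (\<phi> x) \<subseteq> lang_from X x"
  proof
    fix w assume "w \<in> lang_from Y (\<phi> x)"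
    then obtain r where w: "word Y w" and r: "run_from Y (\<phi> x) w r" and acc: "accepting Y w r"
      by (auto simp: lang_from_def)
    define \<psi> where "\<psi> = inv_into (states X) \<phi>"
    have "r i \<in> \<phi> ` states X" for i
      using run_states[OF wf_rename _ w r] x by simp
    then have r_eq: "r i = \<phi> (\<psi> (r i))" and \<psi>_states: "\<psi> (r i) \<in> states X" for i
      unfolding \<psi>_def by (auto simp: inv_into_into f_inv_into_f)
    have "\<psi> (r (Suc i)) \<in> delta X (\<psi> (r i)) (w i)" for i
      using r delta_rename_iff[OF \<psi>_states \<psi>_states] w r_eq
      by (metis run_from_def word_def rename_simps(2))
    moreover have "\<psi> (r 0) = x"
      using r x inj unfolding \<psi>_def by (simp add: run_from_def)
    moreover have "accepting X w (\<psi> \<circ> r)"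
      using acc acc_rename_iff[OF \<psi>_states \<psi>_states] r_eq
      by (simp add: accepting_def)
    ultimately show "w \<in> lang_from X x"
      using w by (auto simp: lang_from_def run_from_def word_def intro!: exI[of _ "\<psi> \<circ> r"])
  qed
qed

lemma GFG_rename: "GFG X \<Longrightarrow> GFG Y"
proof -
  assume "GFG X"
  then obtain f where f: "strategy X (init X) f"
    and f_acc: "\<And>w. w \<in> lang_from X (init X) \<Longrightarrow> accepting X w (\<lambda>i. f (prefix w i))"
    by (auto simp: GFG_def GFG_state_iff)
  have init: "init X \<in> states X"
    using wf by (simp add: wf_tNCW_def)
  note f_states = strategy_states[OF wf init f]
  have "strategy Y (init Y) (\<phi> \<circ> f)"
    using f f_states delta_rename_iff
    by (auto simp: strategy_def trans_rel_def)
  moreover have "accepting Y w (\<lambda>i. (\<phi> \<circ> f) (prefix w i))" if "w \<in> lang_from Y (init Y)" for w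
  proof -
    have w: "w \<in> lang_from X (init X)" "word X w"
      using that lang_from_rename[OF init] by (auto simp: lang_from_def)
    then show ?thesis
      using f_acc[OF w(1)] acc_rename_iff[OF f_states f_states] set_prefix_subset[OF w(2)]
      by (simp add: accepting_def prefix_Suc word_def)
  qed
  ultimately show "GFG Y"
    unfolding GFG_def GFG_state_iff by blast
qed

end

lemma minimal_GFG_card_le:
  fixes A :: "('q, 'a) tNCW" and B :: "('p, 'a) tNCW"
  assumes "minimal_GFG A" "wf_tNCW B" "alphabet B = alphabet A" "GFG B" "lang B = lang A"
  shows "card (states A) \<le> card (states B)"
proof -
  obtain \<phi> :: "'p \<Rightarrow> nat" where \<phi>: "inj_on \<phi> (states B)"
    using finite_imp_inj_to_nat_seg assms(2) unfolding wf_tNCW_def by metis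
  interpret renaming B \<phi>
    using assms(2) \<phi> by unfold_locales
  have "lang Y = lang B"
    using lang_from_rename assms(2) by (simp add: lang_def wf_tNCW_def)
  then have "wf_tNCW Y \<and> alphabet Y = alphabet A \<and> GFG Y \<and> lang Y = lang A"
    using assms(3-5) wf_rename GFG_rename by simp
  then have "card (states A) \<le> card (states Y)"
    using assms(1) unfolding minimal_GFG_def by blast
  then show ?thesis
    using card_image[OF \<phi>] by simp
qed

lemma (in redirection) not_minimal_GFG:
  assumes "(q, p) \<notin> (nacc_edges A)\<^sup>* \<or> safe_lang A q \<subseteq> safe_lang A p"
  shows "\<not> minimal_GFG A"
  using minimal_GFG_card_le[OF _ wf_redirect _ GFG_lang_redirect[OF assms]] card_redirect by auto

lemma safe_centralized:
  assumes "wf_tNCW A" "nice A" "alpha_maximal A" "GFG A" "minimal_GFG A"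
    and "p \<in> states A" "q \<in> states A"
    and "lang_from A p = lang_from A q" "safe_lang A p \<subseteq> safe_lang A q"
  shows "(q, p) \<in> (nacc_edges A)\<^sup>*"
proof (cases "p = q")
  case False
  then interpret redirection A p q
    using assms by unfold_locales
  show ?thesis
    using not_minimal_GFG assms(5) by blast
qed simp

lemma safe_minimal:
  assumes "wf_tNCW A" "nice A" "alpha_maximal A" "GFG A" "minimal_GFG A"
    and "p \<in> states A" "q \<in> states A" "strongly_equiv A p A q"
  shows "p = q"
proof (rule ccontr)
  assume "p \<noteq> q"
  then interpret redirection A p q
    using assms by unfold_locales (simp_all add: strongly_equiv_def)
  show False
    using not_minimal_GFG assms(5,8) by (simp add: strongly_equiv_def)
qed

lemma strongly_equiv_safe_path:
  fixes A :: "('q, 'a) tNCW" and B :: "('p, 'a) tNCW"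
  assumes "wf_tNCW A" "wf_tNCW B" "alphabet A = alphabet B"
    and "normal A" "safe_det A" "sem_det A" "safe_det B" "sem_det B"
  shows "safe_path A x v x' \<Longrightarrow> x \<in> states A \<Longrightarrow> y \<in> states B \<Longrightarrow> strongly_equiv A x B y
    \<Longrightarrow> \<exists>y' \<in> states B. strongly_equiv A x' B y'"
proof (induction v arbitrary: x y)
  case (Cons a v)
  then obtain z where z: "a \<in> alphabet A" "z \<in> delta_nacc A x a" "safe_path A z v x'"
    by auto
  obtain y' where "y' \<in> states B" "strongly_equiv A z B y'"
    using strongly_equiv_safe_successor[OF assms Cons.prems(2-4) z(1,2)] .
  then show ?case
    using Cons.IH[OF z(3)] delta_nacc_states[OF assms(1) Cons.prems(2) z(1)] z(2) by blast
qed auto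

lemma finite_range_repeats:
  fixes f :: "nat \<Rightarrow> 'b"
  assumes "finite (range f)"
  obtains i j where "i < j" "f i = f j"
proof -
  have "\<not> inj f"
    using assms range_inj_infinite by blast
  then show thesis
    using that unfolding inj_def by (metis linorder_neqE_nat)
qed

text \<open>Alternating domination between \<open>A\<close> and \<open>B\<close>, starting from \<open>p\<close>, produces an increasing
  chain of safe languages of states of \<open>A\<close>; it is stationary at any repeated state.\<close>
lemma stationary_domination:
  fixes A :: "('q, 'a) tNCW" and B :: "('p, 'a) tNCW"
  assumes wfA: "wf_tNCW A" and wfB: "wf_tNCW B" and alph: "alphabet A = alphabet B"
    and niceA: "nice A" and niceB: "nice B" and "GFG A" "GFG B" and lang: "lang A = lang B"
    and p: "p \<in> states A"
  obtains p0 y0 where "p0 \<in> states A" "lang_from A p0 = lang_from A p"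
    "safe_lang A p \<subseteq> safe_lang A p0" "y0 \<in> states B" "strongly_equiv A p0 B y0"
proof -
  have "sem_det A" "sem_det B"
    using niceA niceB by (auto simp: nice_def)
  have dom_AB: "\<forall>x \<in> states A. \<exists>y. y \<in> states B \<and> lang_from A x = lang_from B y
      \<and> safe_lang A x \<subseteq> safe_lang B y"
    using safe_lang_dominated[OF wfA wfB alph niceA \<open>GFG B\<close> \<open>sem_det B\<close> lang] by blast
  then obtain H where H: "\<And>x. x \<in> states A \<Longrightarrow>
      H x \<in> states B \<and> lang_from A x = lang_from B (H x) \<and> safe_lang A x \<subseteq> safe_lang B (H x)"
    using bchoice[OF dom_AB] by blast
  have dom_BA: "\<forall>y \<in> states B. \<exists>x. x \<in> states A \<and> lang_from B y = lang_from A x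
      \<and> safe_lang B y \<subseteq> safe_lang A x"
    using safe_lang_dominated[OF wfB wfA alph[symmetric] niceB \<open>GFG A\<close> \<open>sem_det A\<close> lang[symmetric]]
    by blast
  then obtain G where G: "\<And>y. y \<in> states B \<Longrightarrow>
      G y \<in> states A \<and> lang_from B y = lang_from A (G y) \<and> safe_lang B y \<subseteq> safe_lang A (G y)"
    using bchoice[OF dom_BA] by blast
  define it where "it n = ((G \<circ> H) ^^ n) p" for n
  have it_Suc: "it (Suc n) = G (H (it n))" for n
    by (simp add: it_def)
  have it: "it n \<in> states A \<and> lang_from A (it n) = lang_from A p" for n
  proof (induction n)
    case (Suc n)
    then show ?case
      using H[of "it n"] G[of "H (it n)"] unfolding it_Suc by simp
  qed (simp add: it_def p)
  have it_step: "safe_lang A (it n) \<subseteq> safe_lang B (H (it n))"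
    "safe_lang B (H (it n)) \<subseteq> safe_lang A (it (Suc n))" for n
    using H[of "it n"] G[of "H (it n)"] it[of n] unfolding it_Suc by auto
  have it_mono: "safe_lang A (it i) \<subseteq> safe_lang A (it j)" if "i \<le> j" for i j
    using lift_Suc_mono_le[of "\<lambda>n. safe_lang A (it n)", OF _ that] it_step by blast
  have "finite (range it)"
    using it wfA finite_subset[of "range it" "states A"] by (auto simp: wf_tNCW_def)
  then obtain i j where ij: "i < j" "it i = it j"
    by (rule finite_range_repeats)
  have "safe_lang A (it (Suc i)) \<subseteq> safe_lang A (it i)"
    using it_mono[of "Suc i" j] ij by simp
  then have "strongly_equiv A (it i) B (H (it i))"
    using it_step[of i] H[of "it i"] it[of i] unfolding strongly_equiv_def by blast
  moreover have "safe_lang A p \<subseteq> safe_lang A (it i)"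
    using it_mono[of 0 i] by (simp add: it_def)
  ultimately show thesis
    using that it[of i] H[of "it i"] by blast
qed

lemma strongly_equiv_partner:
  fixes A :: "('q, 'a) tNCW" and B :: "('p, 'a) tNCW"
  assumes wfA: "wf_tNCW A" and wfB: "wf_tNCW B" and alph: "alphabet A = alphabet B"
    and niceA: "nice A" and niceB: "nice B" and "GFG A" "GFG B" and lang: "lang A = lang B"
    and "minimal_GFG A" "alpha_maximal A" and p: "p \<in> states A"
  obtains y where "y \<in> states B" "strongly_equiv A p B y"
proof -
  obtain p0 y0 where p0: "p0 \<in> states A" "lang_from A p0 = lang_from A p"
    "safe_lang A p \<subseteq> safe_lang A p0" and y0: "y0 \<in> states B" "strongly_equiv A p0 B y0"
    using stationary_domination[OF assms(1-8) p] .
  have "(p0, p) \<in> (nacc_edges A)\<^sup>*"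
    using safe_centralized[OF wfA niceA assms(10,6,9) p p0(1)] p0(2,3) by simp
  then obtain v where "safe_path A p0 v p"
    using rtrancl_nacc_edges_safe_path by metis
  moreover have "normal A" "safe_det A" "sem_det A" "safe_det B" "sem_det B"
    using niceA niceB by (auto simp: nice_def)
  ultimately show thesis
    using strongly_equiv_safe_path[OF wfA wfB alph] p0(1) y0 that by blast
qed

section \<open>Isomorphism\<close>

lemma delta_iff_residual:
  assumes "wf_tNCW A" "sem_det A" "alpha_maximal A"
    and x: "x \<in> states A" and x': "x' \<in> states A" and a: "a \<in> alphabet A"
  shows "x' \<in> delta A x a \<longleftrightarrow> lang_from A x' = {w. a ## w \<in> lang_from A x}"
proof
  assume "x' \<in> delta A x a"
  then show "lang_from A x' = {w. a ## w \<in> lang_from A x}"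
    by (rule lang_from_residual[OF assms(2) x a])
next
  assume residual: "lang_from A x' = {w. a ## w \<in> lang_from A x}"
  obtain s where s: "s \<in> delta A x a"
    using delta_nonempty[OF assms(1) x a] by blast
  then have "equiv_st A x' s"
    using lang_from_residual[OF assms(2) x a s] residual by (simp add: equiv_st_def)
  then have "allowed A x a x'"
    using x x' a s delta_states[OF assms(1) x a] by (auto simp: allowed_def trans_rel_def)
  then show "x' \<in> delta A x a"
    using assms(3) by (simp add: alpha_maximal_def trans_rel_def)
qed

locale strong_equivalence_bij =
  fixes A :: "('q, 'a) tNCW" and B :: "('p, 'a) tNCW" and \<kappa> :: "'q \<Rightarrow> 'p"
  assumes wfA: "wf_tNCW A" and wfB: "wf_tNCW B" and alph: "alphabet A = alphabet B"
    and A: "normal A" "safe_det A" "sem_det A" "alpha_maximal A"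
    and B: "normal B" "safe_det B" "sem_det B" "alpha_maximal B"
    and safe_min: "\<And>x x'. x \<in> states A \<Longrightarrow> x' \<in> states A \<Longrightarrow> strongly_equiv A x A x' \<Longrightarrow> x = x'"
    and bij: "bij_betw \<kappa> (states A) (states B)"
    and equiv: "\<And>x. x \<in> states A \<Longrightarrow> strongly_equiv A x B (\<kappa> x)"
begin

lemma \<kappa>_states: "x \<in> states A \<Longrightarrow> \<kappa> x \<in> states B"
  using bij by (simp add: bij_betw_apply)

lemma delta_nacc_iff:
  assumes x: "x \<in> states A" and x': "x' \<in> states A" and a: "a \<in> alphabet A"
  shows "x' \<in> delta_nacc A x a \<longleftrightarrow> \<kappa> x' \<in> delta_nacc B (\<kappa> x) a"
proof
  assume "x' \<in> delta_nacc A x a"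
  then obtain y' where y': "y' \<in> delta_nacc B (\<kappa> x) a" "y' \<in> states B" "strongly_equiv A x' B y'"
    using strongly_equiv_safe_successor[OF wfA wfB alph A(1-3) B(2,3) x \<kappa>_states[OF x] equiv[OF x] a]
    by blast
  obtain x'' where x'': "x'' \<in> states A" "y' = \<kappa> x''"
    using bij y'(2) by (metis bij_betw_iff_bijections)
  have "strongly_equiv A x' A x''"
    using strongly_equiv_trans[OF y'(3)[unfolded x''(2)] strongly_equiv_sym[OF equiv[OF x''(1)]]] .
  then show "\<kappa> x' \<in> delta_nacc B (\<kappa> x) a"
    using safe_min[OF x' x''(1)] x''(2) y'(1) by simp
next
  assume "\<kappa> x' \<in> delta_nacc B (\<kappa> x) a"
  then obtain x'' where x'': "x'' \<in> delta_nacc A x a" "x'' \<in> states A"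
    "strongly_equiv B (\<kappa> x') A x''"
    using strongly_equiv_safe_successor[OF wfB wfA alph[symmetric] B(1-3) A(2,3) \<kappa>_states[OF x] x
        strongly_equiv_sym[OF equiv[OF x]]] a alph
    by auto
  have "strongly_equiv A x' A x''"
    using strongly_equiv_trans[OF equiv[OF x'] x''(3)] .
  then show "x' \<in> delta_nacc A x a"
    using safe_min[OF x' x''(2)] x''(1) by simp
qed

lemma delta_iff:
  assumes x: "x \<in> states A" and x': "x' \<in> states A" and a: "a \<in> alphabet A"
  shows "x' \<in> delta A x a \<longleftrightarrow> \<kappa> x' \<in> delta B (\<kappa> x) a"
proof -
  have "x' \<in> delta A x a \<longleftrightarrow> lang_from A x' = {w. a ## w \<in> lang_from A x}"
    using delta_iff_residual[OF wfA A(3,4) x x' a] .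
  also have "\<dots> \<longleftrightarrow> lang_from B (\<kappa> x') = {w. a ## w \<in> lang_from B (\<kappa> x)}"
    using equiv[OF x] equiv[OF x'] by (simp add: strongly_equiv_def)
  also have "\<dots> \<longleftrightarrow> \<kappa> x' \<in> delta B (\<kappa> x) a"
    using delta_iff_residual[OF wfB B(3,4) \<kappa>_states[OF x] \<kappa>_states[OF x']] a alph by simp
  finally show ?thesis .
qed

lemma isomorphic: "isomorphic A B"
proof -
  have "x' \<in> delta_acc A x a \<longleftrightarrow> \<kappa> x' \<in> delta_acc B (\<kappa> x) a"
    if "x \<in> states A" "x' \<in> states A" "a \<in> alphabet A" for x x' a
    using delta_iff[OF that] delta_nacc_iff[OF that] by (auto simp: delta_acc_def delta_nacc_def)
  then show ?thesis
    unfolding isomorphic_def using bij delta_nacc_iff by blast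
qed

end

lemma bij_if_strongly_equiv_partners:
  fixes A :: "('q, 'a) tNCW" and B :: "('p, 'a) tNCW"
  assumes AB: "\<And>x. x \<in> states A \<Longrightarrow> \<exists>y \<in> states B. strongly_equiv A x B y"
    and BA: "\<And>y. y \<in> states B \<Longrightarrow> \<exists>x \<in> states A. strongly_equiv A x B y"
    and min_A: "\<And>x x'. x \<in> states A \<Longrightarrow> x' \<in> states A \<Longrightarrow> strongly_equiv A x A x' \<Longrightarrow> x = x'"
    and min_B: "\<And>y y'. y \<in> states B \<Longrightarrow> y' \<in> states B \<Longrightarrow> strongly_equiv B y B y' \<Longrightarrow> y = y'"
  obtains \<kappa> where "bij_betw \<kappa> (states A) (states B)"
    "\<And>x. x \<in> states A \<Longrightarrow> strongly_equiv A x B (\<kappa> x)"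
proof -
  obtain \<kappa> where \<kappa>: "\<And>x. x \<in> states A \<Longrightarrow> \<kappa> x \<in> states B \<and> strongly_equiv A x B (\<kappa> x)"
    using bchoice[of "states A" "\<lambda>x y. y \<in> states B \<and> strongly_equiv A x B y"] AB by blast
  have "inj_on \<kappa> (states A)"
  proof (rule inj_onI)
    fix x x' assume "x \<in> states A" "x' \<in> states A" "\<kappa> x = \<kappa> x'"
    then show "x = x'"
      using min_A \<kappa> strongly_equiv_trans strongly_equiv_sym by metis
  qed
  moreover have "\<kappa> ` states A = states B"
  proof
    show "states B \<subseteq> \<kappa> ` states A"
    proof
      fix y assume y: "y \<in> states B"
      then obtain x where x: "x \<in> states A" "strongly_equiv A x B y"
        using BA by blast
      then have "\<kappa> x = y"
        using min_B[OF _ y] \<kappa> strongly_equiv_trans strongly_equiv_sym by metis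
      then show "y \<in> \<kappa> ` states A"
        using x(1) by blast
    qed
  qed (use \<kappa> in blast)
  ultimately show thesis
    using that \<kappa> by (simp add: bij_betw_def)
qed

theorem mainTheorem3:
  fixes C1 :: "('q, 'a) tNCW" and C2 :: "('p, 'a) tNCW"
  assumes "wf_tNCW C1" and "wf_tNCW C2"
    and "alphabet C1 = alphabet C2"
    and "nice C1" and "nice C2"
    and "GFG C1" and "GFG C2"
    and "lang C1 = lang C2"
    and "minimal_GFG C1" and "minimal_GFG C2"
    and "alpha_maximal C1" and "alpha_maximal C2"
  shows "isomorphic C1 C2"
proof -
  have props: "normal C1" "safe_det C1" "sem_det C1" "normal C2" "safe_det C2" "sem_det C2"
    using assms(4,5) by (auto simp: nice_def)
  have partners_12: "\<exists>y \<in> states C2. strongly_equiv C1 x C2 y" if "x \<in> states C1" for x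
    using strongly_equiv_partner[OF assms(1-9,11) that] by blast
  have partners_21: "\<exists>x \<in> states C1. strongly_equiv C1 x C2 y" if "y \<in> states C2" for y
    using strongly_equiv_partner[OF assms(2,1) assms(3)[symmetric] assms(5,4,7,6) assms(8)[symmetric]
        assms(10,12) that] strongly_equiv_sym by metis
  obtain \<kappa> where "bij_betw \<kappa> (states C1) (states C2)"
    and "\<And>x. x \<in> states C1 \<Longrightarrow> strongly_equiv C1 x C2 (\<kappa> x)"
    using bij_if_strongly_equiv_partners[OF partners_12 partners_21]
      safe_minimal[OF assms(1,4,11,6,9)] safe_minimal[OF assms(2,5,12,7,10)] by blast
  then interpret strong_equivalence_bij C1 C2 \<kappa>
    using assms(1-3,11,12) props safe_minimal[OF assms(1,4,11,6,9)] by unfold_locales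
  show ?thesis
    by (rule isomorphic)
qed

end
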